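(* Consider the following ZP-OFDM model with no timing offset (hypothesis ${\rm H}_0$, $d=0$). Let $n_{\rm x}\ge1$, $n_{\rm h}\ge 1$, $n_{\rm z}\ge n_{\rm h}$ and $n_{\rm s}=n_{\rm x}+n_{\rm z}$. For block index $n\ge 0$, the transmitted block is $s_n[k]=x_n[k]$ for $0\le k\le n_{\rm x}-1$ and $s_n[k]=0$ for $n_{\rm x}\le k\le n_{\rm s}-1$ (and $s_n[k]=0$ for $k<0$), where the data samples $x_n[k]$ are i.i.d. $\mathcal{CN}(0,\sigma_{\rm x}^2)$. For $n\ge 0$ and $0\le m\le n_{\rm s}-1$ the received sample is $$y_n[m]=\sum_{l=0}^{n_{\rm h}-1}h[nn_{\rm s}+m;l]\,s_n[m-l]+w_n[m],$$ and for $n<0$ (samples received before any transmission) $y_n[m]=w_n[m]$, where for each fixed $(n,m)$ the taps $h[nn_{\rm s}+m;l]\sim\mathcal{CN}(0,\sigma_{{\rm h}_l}^2)$, $l=0,\dots,n_{\rm h}-1$, are mutually independent, the noise $w_n[m]\sim\mathcal{CN}(0,\sigma_{\rm w}^2)$, and data, channel and noise are mutually independent. Let $y_{n_{\rm I}}[m]=\Re\{y_n[m]\}$ and let $f_{Y_{n_{\rm I}}[m]}(\cdot\,|{\rm H}_0)$ be its PDF. Then: (i) If $n<0$ and $0\le m\le n_{\rm s}-1$, or if $n\ge 0$ and $n_{\rm x}+n_{\rm h}-1\le m\le n_{\rm s}-1$, then $$f_{Y_{n_{\rm I}}[m]}(y|{\rm H}_0)=\frac{1}{\sqrt{\pi\sigma_{\rm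 w}^2}}\exp\Big(-\frac{y^2}{\sigma_{\rm w}^2}\Big).$$ (ii) If $n\ge 0$ and $0\le m\le n_{\rm x}+n_{\rm h}-2$, define $\lambda_k=2/(\sigma_{{\rm h}_k}\sigma_{\rm x})$ and $$(a,b)=\begin{cases}(0,m), & 0\le m\le n_{\rm h}-2,\\ (0,n_{\rm h}-1), & n_{\rm h}-1\le m\le n_{\rm x}-1,\\ (m-n_{\rm x}+1,\,n_{\rm h}-1), & n_{\rm x}\le m\le n_{\rm x}+n_{\rm h}-2,\end{cases}$$ and assume $\lambda_a,\dots,\lambda_b$ are pairwise distinct. Then $f_{Y_{n_{\rm I}}[m]}(y|{\rm H}_0)=f_{Y_{n_{\rm I}}[m]}(-y|{\rm H}_0)$ and $$f_{Y_{n_{\rm I}}[m]}(y|{\rm H}_0)=\Big(\prod_{i=a}^{b}\lambda_i\Big)^2\sum_{j=a}^{b}\sum_{n'=a}^{b}\frac{e^{(\lambda_j\sigma_{\rm w}/2)^2}}{\prod_{k=a,k\neq j}^{b}(\lambda_k-\lambda_j)\;\prod_{u=a,u\neq n'}^{b}(\lambda_u-\lambda_{n'})\;(\lambda_j+\lambda_{n'})}\cdot\frac12\Big[e^{-\lambda_j y}\Big(1-\Phi\Big(\frac{\lambda_j\sigma_{\rm w}}{2}-\frac{y}{\sigma_{\rm w}}\Big)\Big)+e^{\lambda_j y}\Big(1-\Phi\Big(\frac{\lambda_j\sigma_{\rm w}}{2}+\frac{y}{\sigma_{\rm w}}\Big)\Big)\Big],$$ where empty products equal $1$. The same expressions hold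 for the PDF of the quadrature component $\Im\{y_n[m]\}$.
   Context: $\mathcal{CN}(0,\sigma^2)$ denotes a circularly-symmetric zero-mean complex Gaussian random variable with variance $\sigma^2$ (so its real and imaginary parts are independent $\mathcal{N}(0,\sigma^2/2)$). $\Phi(x)=\mathrm{erf}(x)=\frac{2}{\sqrt\pi}\int_0^x e^{-t^2}\,dt$ is the Gaussian error function. $\sigma_{{\rm h}_l}^2$, $l=0,\dots,n_{\rm h}-1$, is the (known) power delay profile of the channel, with $\sigma_{{\rm h}_l}>0$. *)

theory Defs
  imports "HOL-Probability.Probability"
begin

text \<open>Gaussian error function, erf(x) = 2/sqrt(pi) * integral from 0 to x of exp(-t^2)
  (oriented interval integral, so also correct for negative x).\<close>
definition erf :: "real \<Rightarrow> real" where
  "erf x = 2 / sqrt pi * (LBINT t=0..x. exp (- (t\<^sup>2)))"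

definition CN_rv :: "'a measure \<Rightarrow> real \<Rightarrow> ('a \<Rightarrow> complex) \<Rightarrow> bool" where
  "CN_rv M s2 X \<longleftrightarrow>
     X \<in> borel_measurable M \<and>
     distributed M lborel (\<lambda>\<omega>. Re (X \<omega>)) (\<lambda>t. ennreal (normal_density 0 (sqrt (s2 / 2)) t)) \<and>
     distributed M lborel (\<lambda>\<omega>. Im (X \<omega>)) (\<lambda>t. ennreal (normal_density 0 (sqrt (s2 / 2)) t)) \<and>
     prob_space.indep_var M borel (\<lambda>\<omega>. Re (X \<omega>)) borel (\<lambda>\<omega>. Im (X \<omega>))"

definition ofdm_s :: "nat \<Rightarrow> (int \<Rightarrow> nat \<Rightarrow> 'a \<Rightarrow> complex) \<Rightarrow> int \<Rightarrow> int \<Rightarrow> 'a \<Rightarrow> complex" where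
  "ofdm_s nx x n k \<omega> = (if 0 \<le> k \<and> k < int nx then x n (nat k) \<omega> else 0)"

definition ofdm_y :: "nat \<Rightarrow> nat \<Rightarrow> nat \<Rightarrow> (int \<Rightarrow> nat \<Rightarrow> 'a \<Rightarrow> complex)
    \<Rightarrow> (int \<Rightarrow> nat \<Rightarrow> 'a \<Rightarrow> complex) \<Rightarrow> (int \<Rightarrow> nat \<Rightarrow> 'a \<Rightarrow> complex)
    \<Rightarrow> int \<Rightarrow> nat \<Rightarrow> 'a \<Rightarrow> complex" where
  "ofdm_y nx ns nh x h w n m \<omega> =
     (if n < 0 then w n m \<omega>
      else (\<Sum>l<nh. h (n * int ns + int m) l \<omega> * ofdm_s nx x n (int m - int l) \<omega>) + w n m \<omega>)"

text \<open>The index range (a,b) of part (ii): the taps l with 0 <= m - l <= nx - 1.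
  This coincides with the paper's three-case definition
  (0,m) / (0,nh-1) / (m-nx+1,nh-1) on each of its cases whenever they do not overlap.\<close>
definition ofdm_ab :: "nat \<Rightarrow> nat \<Rightarrow> nat \<Rightarrow> nat \<times> nat" where
  "ofdm_ab nx nh m = ((m + 1) - nx, min m (nh - 1))"

definition ofdm_pdf :: "(nat \<Rightarrow> real) \<Rightarrow> real \<Rightarrow> nat \<Rightarrow> nat \<Rightarrow> real \<Rightarrow> real" where
  "ofdm_pdf lam sw a b y =
     (\<Prod>i=a..b. lam i)\<^sup>2 *
     (\<Sum>j=a..b. \<Sum>n'=a..b.
        exp ((lam j * sw / 2)\<^sup>2) /
          ((\<Prod>k\<in>{a..b} - {j}. (lam k - lam j)) * (\<Prod>u\<in>{a..b} - {n'}. (lam u - lam n')) * (lam j + lam n'))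
        * (1 / 2) * (exp (- lam j * y) * (1 - erf (lam j * sw / 2 - y / sw))
                     + exp (lam j * y) * (1 - erf (lam j * sw / 2 + y / sw))))"

end

(*
  On an active sample the real (or imaginary) part of y_n[m] is a sum of independent terms
  Re (u h x) with h, x independent circular Gaussians, plus Gaussian noise. Conditionally on x,
  Re (u h x) is centred normal with variance |x|^2 sigma_h^2 / 2; averaging over the exponential
  law of |x|^2 gives the characteristic function 1 / (1 + t^2 sigma_h^2 sigma_x^2 / 4), so each
  term is Laplace distributed with parameter lambda = 2 / (sigma_h sigma_x). By independence the
  received component has characteristic function
  prod_l lambda_l^2 / (lambda_l^2 + t^2) * exp (- sigma_w^2 t^2 / 4).
  Partial fractions split the product into single Laplace factors, and each Laplace factor times
  the Gaussian one is the Fourier transform of the Laplace-Gaussian convolution, whose density is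
  the erf expression of the closed form. Levy's uniqueness theorem then identifies the density.
  On the remaining samples only the noise is left.
*)

theory Submission
  imports Defs
begin

section \<open>Partial fractions\<close>

lemma partial_fraction_split:
  fixes a b s D :: "'a::field"
  assumes "a \<noteq> b" "b \<noteq> s" "a \<noteq> s"
  shows "1 / ((a - b) * D * (b - s)) = (1 / (D * (b - s)) - 1 / (D * (b - a))) / (a - s)"
proof -
  have "a - b \<noteq> 0" "b - s \<noteq> 0" "a - s \<noteq> 0" "b - a \<noteq> 0"
    using assms by auto
  then have "1 / ((a - b) * (b - s)) = (1 / (b - s) - 1 / (b - a)) / (a - s)"
    by (simp add: divide_simps del: eq_iff_diff_eq_0) (simp add: algebra_simps)
  then have "1 / D * (1 / ((a - b) * (b - s))) = 1 / D * ((1 / (b - s) - 1 / (b - a)) / (a - s))"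
    by simp
  then show ?thesis
    by (simp add: algebra_simps)
qed

lemma sum_partial_fractions:
  fixes \<mu> :: "'i \<Rightarrow> 'a::field"
  assumes "finite S" "S \<noteq> {}" "inj_on \<mu> S" "\<forall>i\<in>S. \<mu> i \<noteq> s"
  shows "(\<Sum>j\<in>S. 1 / ((\<Prod>k\<in>S - {j}. \<mu> k - \<mu> j) * (\<mu> j - s))) = 1 / (\<Prod>k\<in>S. \<mu> k - s)"
  using assms
proof (induction S arbitrary: s rule: finite_ne_induct)
  case (singleton j)
  then show ?case by simp
next
  case (insert \<nu> S)
  let ?D = "\<lambda>j. \<Prod>k\<in>S - {j}. \<mu> k - \<mu> j"
  have sep: "\<mu> \<nu> \<noteq> \<mu> j" if "j \<in> S" for j
    using insert.prems(1) insert.hyps(3) that by (metis inj_on_contraD insertCI)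
  have IH: "(\<Sum>j\<in>S. 1 / (?D j * (\<mu> j - s'))) = 1 / (\<Prod>k\<in>S. \<mu> k - s')"
    if "\<forall>i\<in>S. \<mu> i \<noteq> s'" for s'
    using insert.IH[of s'] insert.prems(1) that by (auto intro: inj_on_subset)
  have \<nu>s: "\<mu> \<nu> \<noteq> s" and js: "\<And>j. j \<in> S \<Longrightarrow> \<mu> j \<noteq> s"
    using insert.prems(2) by auto
  have "(\<Sum>j\<in>insert \<nu> S. 1 / ((\<Prod>k\<in>insert \<nu> S - {j}. \<mu> k - \<mu> j) * (\<mu> j - s)))
      = (\<Sum>j\<in>S. 1 / ((\<mu> \<nu> - \<mu> j) * ?D j * (\<mu> j - s))) + 1 / ((\<Prod>k\<in>S. \<mu> k - \<mu> \<nu>) * (\<mu> \<nu> - s))"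
  proof -
    have "insert \<nu> S - {j} = insert \<nu> (S - {j})" if "j \<in> S" for j
      using that insert.hyps(3) by auto
    then show ?thesis
      using insert.hyps by (simp add: sum.insert_if cong: sum.cong)
  qed
  also have "(\<Sum>j\<in>S. 1 / ((\<mu> \<nu> - \<mu> j) * ?D j * (\<mu> j - s)))
      = (\<Sum>j\<in>S. (1 / (?D j * (\<mu> j - s)) - 1 / (?D j * (\<mu> j - \<mu> \<nu>))) / (\<mu> \<nu> - s))"
    using sep js \<nu>s by (intro sum.cong refl partial_fraction_split) simp_all
  also have "\<dots> = (1 / (\<Prod>k\<in>S. \<mu> k - s) - 1 / (\<Prod>k\<in>S. \<mu> k - \<mu> \<nu>)) / (\<mu> \<nu> - s)"
  proof -
    have "\<forall>i\<in>S. \<mu> i \<noteq> \<mu> \<nu>"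
      using sep by (metis)
    then show ?thesis
      using IH[of s] IH[of "\<mu> \<nu>"] js by (simp add: sum_subtractf flip: sum_divide_distrib)
  qed
  also have "(1 / (\<Prod>k\<in>S. \<mu> k - s) - 1 / (\<Prod>k\<in>S. \<mu> k - \<mu> \<nu>)) / (\<mu> \<nu> - s)
      + 1 / ((\<Prod>k\<in>S. \<mu> k - \<mu> \<nu>) * (\<mu> \<nu> - s)) = 1 / ((\<mu> \<nu> - s) * (\<Prod>k\<in>S. \<mu> k - s))"
    by (simp add: diff_divide_distrib mult.commute)
  also have "\<dots> = 1 / (\<Prod>k\<in>insert \<nu> S. \<mu> k - s)"
    using insert.hyps by simp
  finally show ?case .
qed

definition partial_fraction_coeff :: "('i \<Rightarrow> 'a::field) \<Rightarrow> 'i set \<Rightarrow> 'i \<Rightarrow> 'a" where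
  "partial_fraction_coeff \<mu> S j = (\<Prod>i\<in>S. \<mu> i) / (\<Prod>k\<in>S - {j}. \<mu> k - \<mu> j)"

lemma prod_partial_fractions:
  fixes \<mu> :: "'i \<Rightarrow> 'a::field"
  assumes "finite S" "S \<noteq> {}" "inj_on \<mu> S" "\<forall>i\<in>S. \<mu> i \<noteq> s"
  shows "(\<Prod>l\<in>S. \<mu> l / (\<mu> l - s)) = (\<Sum>j\<in>S. partial_fraction_coeff \<mu> S j / (\<mu> j - s))"
proof -
  have "(\<Prod>l\<in>S. \<mu> l / (\<mu> l - s)) = (\<Prod>i\<in>S. \<mu> i) * (1 / (\<Prod>k\<in>S. \<mu> k - s))"
    by (simp add: prod_dividef)
  also have "\<dots> = (\<Prod>i\<in>S. \<mu> i) * (\<Sum>j\<in>S. 1 / ((\<Prod>k\<in>S - {j}. \<mu> k - \<mu> j) * (\<mu> j - s)))"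
    by (simp only: sum_partial_fractions[OF assms])
  finally show ?thesis
    by (simp add: sum_distrib_left partial_fraction_coeff_def)
qed

lemma partial_fraction_coeff_square:
  fixes lam :: "'i \<Rightarrow> real"
  assumes S: "finite S" and j: "j \<in> S" and pos: "\<forall>i\<in>S. lam i > 0"
  shows "partial_fraction_coeff (\<lambda>l. (lam l)\<^sup>2) S j
       = partial_fraction_coeff lam S j * (2 * lam j) * (\<Prod>l\<in>S. lam l / (lam l + lam j))"
proof -
  have "(\<Prod>l\<in>S. lam l + lam j) = 2 * lam j * (\<Prod>l\<in>S - {j}. lam l + lam j)"
    using S j by (simp add: prod.remove)
  moreover have "(\<Prod>k\<in>S - {j}. lam k - lam j) * (\<Prod>l\<in>S - {j}. lam l + lam j)
      = (\<Prod>k\<in>S - {j}. (lam k)\<^sup>2 - (lam j)\<^sup>2)"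
    by (simp add: prod.distrib[symmetric] power2_eq_square algebra_simps)
  moreover have "(\<Prod>i\<in>S. (lam i)\<^sup>2) = (\<Prod>i\<in>S. lam i) * (\<Prod>i\<in>S. lam i)"
    by (simp add: power2_eq_square prod.distrib)
  moreover have "lam j \<noteq> 0"
    using pos j by auto
  ultimately show ?thesis
    using pos j by (simp add: partial_fraction_coeff_def prod_dividef field_simps)
qed

text \<open>The decomposition is applied to the nodes \<open>(lam l)\<^sup>2\<close> at \<open>s = - t\<^sup>2\<close>; its coefficients are
  then rewritten through the decomposition in the nodes \<open>lam l\<close> evaluated at \<open>s = - lam j\<close>,
  which produces the double sum of the closed-form density.\<close>

lemma prod_lorentzian_partial_fractions:
  fixes lam :: "'i \<Rightarrow> real"
  assumes S: "finite S" "S \<noteq> {}" and inj: "inj_on lam S" and pos: "\<forall>i\<in>S. lam i > 0"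
  shows "(\<Prod>l\<in>S. (lam l)\<^sup>2 / ((lam l)\<^sup>2 + t\<^sup>2))
       = (\<Sum>j\<in>S. \<Sum>n\<in>S. partial_fraction_coeff lam S j * partial_fraction_coeff lam S n / (lam j + lam n)
                          * (2 * lam j / ((lam j)\<^sup>2 + t\<^sup>2)))"
proof -
  let ?c = "partial_fraction_coeff lam S" and ?c2 = "partial_fraction_coeff (\<lambda>l. (lam l)\<^sup>2) S"
  have inj2: "inj_on (\<lambda>l. (lam l)\<^sup>2) S"
    using inj pos by (auto simp: inj_on_def power2_eq_iff_nonneg less_imp_le)
  have "\<forall>i\<in>S. (lam i)\<^sup>2 \<noteq> - t\<^sup>2"
    using pos by (smt (verit) zero_less_power zero_le_power2)
  then have "(\<Prod>l\<in>S. (lam l)\<^sup>2 / ((lam l)\<^sup>2 + t\<^sup>2)) = (\<Sum>j\<in>S. ?c2 j / ((lam j)\<^sup>2 + t\<^sup>2))"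
    using prod_partial_fractions[OF S inj2, of "- t\<^sup>2"] by simp
  also have "\<dots> = (\<Sum>j\<in>S. \<Sum>n\<in>S. ?c j * (2 * lam j / ((lam j)\<^sup>2 + t\<^sup>2)) * (?c n / (lam j + lam n)))"
  proof (intro sum.cong refl)
    fix j assume j: "j \<in> S"
    have "\<forall>i\<in>S. lam i \<noteq> - lam j"
      using pos j by (metis add.inverse_inverse neg_0_less_iff_less not_less_iff_gr_or_eq)
    then have "(\<Sum>n\<in>S. ?c n / (lam n + lam j)) = (\<Prod>l\<in>S. lam l / (lam l + lam j))"
      using prod_partial_fractions[OF S inj, of "- lam j"] by simp
    then have "?c2 j / ((lam j)\<^sup>2 + t\<^sup>2) = ?c j * (2 * lam j / ((lam j)\<^sup>2 + t\<^sup>2)) * (\<Sum>n\<in>S. ?c n / (lam j + lam n))"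
      by (simp add: partial_fraction_coeff_square[OF S(1) j pos] add.commute)
    then show "?c2 j / ((lam j)\<^sup>2 + t\<^sup>2) = (\<Sum>n\<in>S. ?c j * (2 * lam j / ((lam j)\<^sup>2 + t\<^sup>2)) * (?c n / (lam j + lam n)))"
      by (simp add: sum_distrib_left)
  qed
  finally show ?thesis
    by (simp add: ac_simps)
qed

section \<open>The error function\<close>

lemma integrable_exp_neg_square: "integrable lborel (\<lambda>x::real. exp (- x\<^sup>2))"
proof -
  have "integrable lborel (\<lambda>x. sqrt pi * normal_density 0 (sqrt (1/2)) x)"
    by simp
  moreover have "sqrt pi * normal_density 0 (sqrt (1/2)) x = exp (- x\<^sup>2)" for x :: real
    by (simp add: normal_density_def real_sqrt_mult)
  ultimately show ?thesis
    by simp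
qed

lemma set_integrable_exp_neg_square: "A \<in> sets borel \<Longrightarrow> set_integrable lborel A (\<lambda>x::real. exp (- x\<^sup>2))"
  unfolding set_integrable_def by (intro integrable_mult_indicator integrable_exp_neg_square) auto

lemma erf_tail_integral: "(LBINT u:{w<..}. exp (- u\<^sup>2)) = sqrt pi / 2 * (1 - erf w)"
proof -
  have int: "interval_lebesgue_integrable lborel a b (\<lambda>u::real. exp (- u\<^sup>2))" for a b
    by (simp add: interval_lebesgue_integrable_def set_integrable_exp_neg_square)
  have half: "(LBINT u:{0<..}. exp (- (u::real)\<^sup>2)) = sqrt pi / 2"
  proof -
    have ae: "AE x in lborel. indicator {0<..} x *\<^sub>R exp (- x\<^sup>2) = indicator {0..} x *\<^sub>R (exp (- x\<^sup>2) :: real)"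
      using AE_lborel_singleton[of 0] by eventually_elim (auto split: split_indicator)
    have "(LBINT u:{0<..}. exp (- (u::real)\<^sup>2)) = (\<integral>x. indicator {0..} x *\<^sub>R exp (- x\<^sup>2) \<partial>lborel)"
      unfolding set_lebesgue_integral_def by (rule integral_cong_AE[OF _ _ ae]) measurable
    then show ?thesis
      using gaussian_moment_0 by (simp add: has_bochner_integral_integral_eq)
  qed
  have "(LBINT u=0..w. exp (- u\<^sup>2)) + (LBINT u=ereal w..\<infinity>. exp (- u\<^sup>2)) = (LBINT u=0..\<infinity>. exp (- u\<^sup>2))"
    by (rule interval_integral_sum) (rule int)
  moreover have "sqrt pi / 2 * (1 - erf w) = sqrt pi / 2 - (LBINT u=0..w. exp (- u\<^sup>2))"
    unfolding erf_def using pi_gt_zero by (simp add: field_simps)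
  ultimately show ?thesis
    using half by (simp add: interval_integral_Ioi)
qed

lemma nn_integral_exp_neg_square_Ioi:
  "(\<integral>\<^sup>+u. ennreal (indicator {w<..} u * exp (- u\<^sup>2)) \<partial>lborel) = ennreal (sqrt pi / 2 * (1 - erf w))"
proof -
  have int: "integrable lborel (\<lambda>u. indicator {w<..} u * exp (- u\<^sup>2))"
    using set_integrable_exp_neg_square[of "{w<..}"] by (simp add: set_integrable_def)
  have eq: "(\<integral>u. indicator {w<..} u * exp (- u\<^sup>2) \<partial>lborel) = sqrt pi / 2 * (1 - erf w)"
    using erf_tail_integral[of w] by (simp add: set_lebesgue_integral_def)
  show ?thesis
    using int by (subst nn_integral_eq_integral) (simp_all only: eq, auto)
qed

lemma erf_le_one: "erf w \<le> 1"
proof -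
  have "0 \<le> (LBINT u:{w<..}. exp (- u\<^sup>2))"
    unfolding set_lebesgue_integral_def by (rule integral_nonneg_AE) (auto split: split_indicator)
  then show ?thesis
    using pi_gt_zero by (auto simp: erf_tail_integral zero_le_mult_iff)
qed

lemma erf_has_real_derivative: "(erf has_real_derivative 2 / sqrt pi * exp (- x\<^sup>2)) (at x)"
proof -
  define r where "r = \<bar>x\<bar> + 1"
  have "((\<lambda>u. LBINT t=ereal 0..u. exp (- t\<^sup>2)) has_vector_derivative exp (- x\<^sup>2)) (at x within {-r..r})"
    by (rule interval_integral_FTC2) (auto simp: r_def intro!: continuous_intros)
  then have "((\<lambda>u. LBINT t=ereal 0..u. exp (- t\<^sup>2)) has_real_derivative exp (- x\<^sup>2)) (at x)"
    by (simp add: at_within_Icc_at r_def has_real_derivative_iff_has_vector_derivative)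
  from DERIV_cmult[OF this, of "2 / sqrt pi"] show ?thesis
    unfolding erf_def[abs_def] by (simp add: zero_ereal_def)
qed

lemma borel_measurable_erf[measurable]: "erf \<in> borel_measurable borel"
  by (intro borel_measurable_continuous_onI continuous_at_imp_continuous_on ballI
      DERIV_isCont[OF erf_has_real_derivative])

section \<open>The Laplace distribution\<close>

lemma tendsto_exp_mult_at_top: "c < 0 \<Longrightarrow> ((\<lambda>x::real. exp (c * x)) \<longlongrightarrow> 0) at_top"
  by (rule filterlim_compose[OF exp_at_bot])
     (auto intro: filterlim_tendsto_neg_mult_at_bot[OF tendsto_const] simp: filterlim_ident)

lemma set_integrable_exp_complex_Ioi:
  fixes z :: complex
  assumes z: "Re z < 0"
  shows "set_integrable lborel {0<..} (\<lambda>x. exp (z * of_real x))"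
proof -
  have "set_integrable lborel (einterval 0 \<infinity>) (\<lambda>x. exp (Re z * x))"
  proof (rule interval_integral_FTC_nonneg)
    show "((\<lambda>x. exp (Re z * x) / Re z) has_real_derivative exp (Re z * x)) (at x)" for x
      using z by (auto intro!: derivative_eq_intros)
    have "((\<lambda>x. exp (Re z * x) / Re z) \<longlongrightarrow> exp (Re z * 0) / Re z) (at_right 0)"
      using z by (intro tendsto_intros) auto
    then show "(((\<lambda>x. exp (Re z * x) / Re z) \<circ> real_of_ereal) \<longlongrightarrow> 1 / Re z) (at_right 0)"
      unfolding zero_ereal_def ereal_tendsto_simps1 by simp
    show "(((\<lambda>x. exp (Re z * x) / Re z) \<circ> real_of_ereal) \<longlongrightarrow> 0) (at_left \<infinity>)"
      unfolding ereal_tendsto_simps1 using tendsto_divide_zero[OF tendsto_exp_mult_at_top[OF z]] by simp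
  qed (auto intro!: continuous_intros)
  then show ?thesis
    unfolding set_integrable_def zero_ereal_def einterval_eq_Ici
    by (rule Bochner_Integration.integrable_bound) (auto simp: norm_exp_eq_Re split: split_indicator)
qed

lemma set_integral_exp_complex_Ioi:
  fixes z :: complex
  assumes z: "Re z < 0"
  shows "(LBINT x:{0<..}. exp (z * of_real x)) = - 1 / z"
proof -
  have zn: "z \<noteq> 0"
    using z by auto
  have "(LBINT x=0..\<infinity>. exp (z * of_real x)) = 0 - 1 / z"
  proof (rule interval_integral_FTC_integrable)
    show "((\<lambda>x. exp (z * of_real x) / z) has_vector_derivative exp (z * of_real x)) (at x)" for x
      using zn by (auto intro!: derivative_eq_intros has_vector_derivative_real_field)
    have "((\<lambda>x. exp (z * of_real x) / z) \<longlongrightarrow> exp (z * of_real 0) / z) (at_right 0)"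
      using zn by (intro tendsto_intros) auto
    then show "(((\<lambda>x. exp (z * of_real x) / z) \<circ> real_of_ereal) \<longlongrightarrow> 1 / z) (at_right 0)"
      unfolding zero_ereal_def ereal_tendsto_simps1 by simp
    have "((\<lambda>x. exp (Re z * x) / cmod z) \<longlongrightarrow> 0) at_top"
      using tendsto_divide_zero[OF tendsto_exp_mult_at_top[OF z]] .
    then have "((\<lambda>x. norm (exp (z * of_real x) / z)) \<longlongrightarrow> 0) at_top"
      by (simp add: norm_divide norm_exp_eq_Re)
    then show "(((\<lambda>x. exp (z * of_real x) / z) \<circ> real_of_ereal) \<longlongrightarrow> 0) (at_left \<infinity>)"
      unfolding ereal_tendsto_simps1 by (simp only: tendsto_norm_zero_iff)
    show "isCont (\<lambda>x. exp (z * of_real x)) x" for x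
      by (intro continuous_intros)
    show "set_integrable lborel (einterval 0 \<infinity>) (\<lambda>x. exp (z * of_real x))"
      using set_integrable_exp_complex_Ioi[OF z] by (simp add: zero_ereal_def)
  qed simp
  then show ?thesis
    by (simp add: interval_integral_Ioi zero_ereal_def)
qed

definition laplace_density :: "real \<Rightarrow> real \<Rightarrow> real" where
  "laplace_density l x = l / 2 * exp (- l * \<bar>x\<bar>)"

lemma laplace_density_nonneg: "0 \<le> l \<Longrightarrow> 0 \<le> laplace_density l x"
  unfolding laplace_density_def by simp

lemma borel_measurable_laplace_density[measurable]: "laplace_density l \<in> borel_measurable borel"
  unfolding laplace_density_def by simp

lemma laplace_density_iexp_eq_one_sided:
  assumes "x \<noteq> 0"
  shows "laplace_density l x *\<^sub>R iexp (t * x)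
       = (l / 2) *\<^sub>R (indicator {0<..} x *\<^sub>R exp (Complex (- l) t * of_real x)
                     + indicator {0<..} (- x) *\<^sub>R exp (Complex (- l) (- t) * of_real (- x)))"
proof -
  have "Complex (- l) t * of_real x = of_real (- l * x) + \<i> * of_real (t * x)"
       "Complex (- l) (- t) * of_real (- x) = of_real (l * x) + \<i> * of_real (t * x)"
    by (simp_all add: complex_eq_iff)
  then have pos: "exp (Complex (- l) t * of_real x) = of_real (exp (- l * x)) * iexp (t * x)"
       and neg: "exp (Complex (- l) (- t) * of_real (- x)) = of_real (exp (l * x)) * iexp (t * x)"
    by (simp_all only: exp_add exp_of_real)
  show ?thesis
  proof (cases "x > 0")
    case True
    then show ?thesis
      using pos by (simp add: laplace_density_def scaleR_conv_of_real)
  next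
    case False
    then have "x < 0"
      using assms by simp
    then show ?thesis
      using neg by (simp add: laplace_density_def scaleR_conv_of_real)
  qed
qed

lemma laplace_density_fourier:
  assumes l: "l > 0"
  shows integrable_laplace_density_iexp: "integrable lborel (\<lambda>x. laplace_density l x *\<^sub>R iexp (t * x))"
    and integral_laplace_density_iexp:
      "(\<integral>x. laplace_density l x *\<^sub>R iexp (t * x) \<partial>lborel) = complex_of_real (l\<^sup>2 / (l\<^sup>2 + t\<^sup>2))"
proof -
  define z1 where "z1 = Complex (- l) t"
  define z2 where "z2 = Complex (- l) (- t)"
  have z: "Re z1 < 0" "Re z2 < 0"
    using l by (auto simp: z1_def z2_def)
  let ?g1 = "\<lambda>x. indicator {0<..} x *\<^sub>R exp (z1 * of_real x)"
  let ?g2 = "\<lambda>x. indicator {0<..} (- x) *\<^sub>R exp (z2 * of_real (- x))"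
  have i1: "integrable lborel ?g1"
    using set_integrable_exp_complex_Ioi[OF z(1)] by (simp add: set_integrable_def)
  have i2: "integrable lborel ?g2"
    using set_integrable_exp_complex_Ioi[OF z(2)]
      lborel_integrable_real_affine_iff[of "-1" "\<lambda>x. indicator {0<..} x *\<^sub>R exp (z2 * of_real x)" 0]
    by (simp add: set_integrable_def)
  have e1: "integral\<^sup>L lborel ?g1 = - 1 / z1"
    using set_integral_exp_complex_Ioi[OF z(1)] by (simp add: set_lebesgue_integral_def)
  have e2: "integral\<^sup>L lborel ?g2 = - 1 / z2"
    using set_integral_exp_complex_Ioi[OF z(2)]
      lborel_integral_real_affine[of "-1" "\<lambda>x. indicator {0<..} x *\<^sub>R exp (z2 * of_real x)" 0]
    by (simp add: set_lebesgue_integral_def)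
  have ae: "AE x in lborel. laplace_density l x *\<^sub>R iexp (t * x) = (l / 2) *\<^sub>R (?g1 x + ?g2 x)"
    using AE_lborel_singleton[of 0]
    unfolding z1_def z2_def by eventually_elim (rule laplace_density_iexp_eq_one_sided)
  have "integrable lborel (\<lambda>x. (l / 2) *\<^sub>R (?g1 x + ?g2 x))"
    using i1 i2 by simp
  then show "integrable lborel (\<lambda>x. laplace_density l x *\<^sub>R iexp (t * x))"
  proof (rule integrable_cong_AE_imp)
    show "AE x in lborel. (l / 2) *\<^sub>R (?g1 x + ?g2 x) = laplace_density l x *\<^sub>R iexp (t * x)"
      using ae by eventually_elim simp
  qed measurable
  have "(\<integral>x. laplace_density l x *\<^sub>R iexp (t * x) \<partial>lborel) = (\<integral>x. (l / 2) *\<^sub>R (?g1 x + ?g2 x) \<partial>lborel)"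
    by (rule integral_cong_AE[OF _ _ ae]) measurable
  also have "\<dots> = (l / 2) *\<^sub>R (- 1 / z1 + - 1 / z2)"
    using i1 i2 by (simp only: integral_scaleR_right Bochner_Integration.integral_add e1 e2)
  also have "- 1 / z1 + - 1 / z2 = complex_of_real (2 * l / (l\<^sup>2 + t\<^sup>2))"
    unfolding z1_def z2_def using l
    by (simp add: complex_eq_iff Re_divide Im_divide cmod_power2 power2_eq_square add_divide_distrib[symmetric])
  finally show "(\<integral>x. laplace_density l x *\<^sub>R iexp (t * x) \<partial>lborel) = complex_of_real (l\<^sup>2 / (l\<^sup>2 + t\<^sup>2))"
    by (simp add: scaleR_conv_of_real power2_eq_square)
qed

lemma prob_space_laplace_density:
  assumes l: "l > 0"
  shows "prob_space (density lborel (\<lambda>x. ennreal (laplace_density l x)))"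
proof
  have "integrable lborel (laplace_density l)"
    using integrable_Re[OF integrable_laplace_density_iexp[OF l, of 0]] by (simp add: scaleR_conv_of_real)
  moreover have "integral\<^sup>L lborel (laplace_density l) = 1"
    using arg_cong[OF integral_laplace_density_iexp[OF l, of 0], of Re] l by (simp add: scaleR_conv_of_real)
  ultimately show "emeasure (density lborel (\<lambda>x. ennreal (laplace_density l x)))
      (space (density lborel (\<lambda>x. ennreal (laplace_density l x)))) = 1"
    using l by (simp add: emeasure_density nn_integral_eq_integral laplace_density_nonneg)
qed

lemma char_laplace_density:
  assumes l: "l > 0"
  shows "char (density lborel (\<lambda>x. ennreal (laplace_density l x))) t = complex_of_real (l\<^sup>2 / (l\<^sup>2 + t\<^sup>2))"
proof -
  have "char (density lborel (\<lambda>x. ennreal (laplace_density l x))) t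
      = (\<integral>x. laplace_density l x *\<^sub>R iexp (t * x) \<partial>lborel)"
    unfolding char_def by (rule integral_density) (use l in \<open>auto simp: laplace_density_nonneg\<close>)
  then show ?thesis
    by (simp only: integral_laplace_density_iexp[OF l])
qed

section \<open>Laplace noise plus Gaussian noise\<close>

lemma normal_density_half_square:
  "s > 0 \<Longrightarrow> normal_density 0 (sqrt (s\<^sup>2 / 2)) v = 1 / sqrt (pi * s\<^sup>2) * exp (- v\<^sup>2 / s\<^sup>2)"
  by (simp add: normal_density_def)

lemma nn_integral_exp_tail_normal:
  assumes s: "s > 0"
  shows "(\<integral>\<^sup>+v. ennreal (indicator {y<..} v * exp (- l * (v - y)) * normal_density 0 (sqrt (s\<^sup>2 / 2)) v) \<partial>lborel)
       = ennreal (exp (l * y) * exp ((l * s / 2)\<^sup>2) / 2 * (1 - erf (l * s / 2 + y / s)))"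
proof -
  define c where "c = - l * s\<^sup>2 / 2"
  define w where "w = y / s + l * s / 2"
  define C where "C = exp (l * y) * exp ((l * s / 2)\<^sup>2) / (sqrt pi * s)"
  have C: "C \<ge> 0"
    using s unfolding C_def by simp
  \<comment> \<open>Completing the square: the substitution v = c + s u turns the integrand into a Gaussian tail.\<close>
  have subst: "indicator {y<..} (c + s * u) * exp (- l * (c + s * u - y)) * normal_density 0 (sqrt (s\<^sup>2 / 2)) (c + s * u)
      = C * (indicator {w<..} u * exp (- u\<^sup>2))" for u
  proof -
    have "(y < c + s * u) = (w < u)"
      using s unfolding c_def w_def by (simp add: field_simps power2_eq_square)
    moreover have "- l * (c + s * u - y) + - (c + s * u)\<^sup>2 / s\<^sup>2 = l * y + (l * s / 2)\<^sup>2 + - u\<^sup>2"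
      using s unfolding c_def by (simp add: field_simps power2_eq_square)
    then have "exp (- l * (c + s * u - y)) * exp (- (c + s * u)\<^sup>2 / s\<^sup>2) = exp (l * y) * exp ((l * s / 2)\<^sup>2) * exp (- u\<^sup>2)"
      by (simp only: exp_add[symmetric])
    ultimately show ?thesis
      unfolding normal_density_half_square[OF s] C_def using s by (simp add: indicator_def real_sqrt_mult field_simps)
  qed
  have "(\<integral>\<^sup>+v. ennreal (indicator {y<..} v * exp (- l * (v - y)) * normal_density 0 (sqrt (s\<^sup>2 / 2)) v) \<partial>lborel)
      = ennreal s * (\<integral>\<^sup>+u. ennreal (C * (indicator {w<..} u * exp (- u\<^sup>2))) \<partial>lborel)"
  proof -
    have "(\<integral>\<^sup>+v. ennreal (indicator {y<..} v * exp (- l * (v - y)) * normal_density 0 (sqrt (s\<^sup>2 / 2)) v) \<partial>lborel)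
      = ennreal \<bar>s\<bar> * (\<integral>\<^sup>+u. ennreal (indicator {y<..} (c + s * u) * exp (- l * (c + s * u - y))
          * normal_density 0 (sqrt (s\<^sup>2 / 2)) (c + s * u)) \<partial>lborel)"
      using s by (intro nn_integral_real_affine) auto
    then show ?thesis
      by (simp only: subst abs_of_pos[OF s])
  qed
  also have "\<dots> = ennreal s * (ennreal C * ennreal (sqrt pi / 2 * (1 - erf w)))"
  proof -
    have "(\<lambda>u. ennreal (indicator {w<..} u * exp (- u\<^sup>2))) \<in> borel_measurable lborel"
      by simp
    then show ?thesis
      by (simp only: ennreal_mult'[OF C] nn_integral_cmult nn_integral_exp_neg_square_Ioi)
  qed
  also have "\<dots> = ennreal (s * (C * (sqrt pi / 2 * (1 - erf w))))"
  proof -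
    have "0 \<le> sqrt pi / 2 * (1 - erf w)"
      using erf_le_one[of w] by simp
    then show ?thesis
      using s C by (metis ennreal_mult less_imp_le mult_nonneg_nonneg)
  qed
  also have "s * (C * (sqrt pi / 2 * (1 - erf w))) = exp (l * y) * exp ((l * s / 2)\<^sup>2) / 2 * (1 - erf (l * s / 2 + y / s))"
    using s unfolding C_def w_def by (simp add: field_simps)
  finally show ?thesis .
qed

lemma nn_integral_exp_tail_normal_left:
  assumes s: "s > 0"
  shows "(\<integral>\<^sup>+v. ennreal (indicator {..<y} v * exp (- l * (y - v)) * normal_density 0 (sqrt (s\<^sup>2 / 2)) v) \<partial>lborel)
       = ennreal (exp (- l * y) * exp ((l * s / 2)\<^sup>2) / 2 * (1 - erf (l * s / 2 - y / s)))"
proof -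
  have reflect: "indicator {..<y} (- u) * exp (- l * (y - - u)) * normal_density 0 (sqrt (s\<^sup>2 / 2)) (- u)
      = indicator {- y<..} u * exp (- l * (u - - y)) * normal_density 0 (sqrt (s\<^sup>2 / 2)) u" for u
    by (simp add: indicator_def normal_density_def algebra_simps)
  have "(\<integral>\<^sup>+v. ennreal (indicator {..<y} v * exp (- l * (y - v)) * normal_density 0 (sqrt (s\<^sup>2 / 2)) v) \<partial>lborel)
      = (\<integral>\<^sup>+u. ennreal (indicator {- y<..} u * exp (- l * (u - - y)) * normal_density 0 (sqrt (s\<^sup>2 / 2)) u) \<partial>lborel)"
  proof -
    have "(\<integral>\<^sup>+v. ennreal (indicator {..<y} v * exp (- l * (y - v)) * normal_density 0 (sqrt (s\<^sup>2 / 2)) v) \<partial>lborel)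
      = ennreal \<bar>-1\<bar> * (\<integral>\<^sup>+u. ennreal (indicator {..<y} (0 + -1 * u) * exp (- l * (y - (0 + -1 * u)))
          * normal_density 0 (sqrt (s\<^sup>2 / 2)) (0 + -1 * u)) \<partial>lborel)"
      by (intro nn_integral_real_affine) auto
    then show ?thesis
      by (simp only: reflect abs_neg_one ennreal_1 mult_1 add_0 mult_minus1)
  qed
  also have "\<dots> = ennreal (exp (- l * y) * exp ((l * s / 2)\<^sup>2) / 2 * (1 - erf (l * s / 2 - y / s)))"
    using nn_integral_exp_tail_normal[OF s, of "- y" l] by simp
  finally show ?thesis .
qed

definition laplace_normal_density :: "real \<Rightarrow> real \<Rightarrow> real \<Rightarrow> real" where
  "laplace_normal_density l s y = l / 4 * exp ((l * s / 2)\<^sup>2) *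
     (exp (- l * y) * (1 - erf (l * s / 2 - y / s)) + exp (l * y) * (1 - erf (l * s / 2 + y / s)))"

lemma laplace_normal_density_nonneg: "0 \<le> l \<Longrightarrow> 0 \<le> laplace_normal_density l s y"
  unfolding laplace_normal_density_def
  using erf_le_one[of "l * s / 2 - y / s"] erf_le_one[of "l * s / 2 + y / s"]
  by (intro mult_nonneg_nonneg add_nonneg_nonneg) auto

lemma borel_measurable_laplace_normal_density[measurable]:
  "laplace_normal_density l s \<in> borel_measurable borel"
  unfolding laplace_normal_density_def by measurable

lemma laplace_convolution_normal_density:
  assumes s: "s > 0" and l: "l > 0"
  shows "(\<integral>\<^sup>+v. ennreal (laplace_density l (y - v)) * ennreal (normal_density 0 (sqrt (s\<^sup>2 / 2)) v) \<partial>lborel)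
       = ennreal (laplace_normal_density l s y)"
proof -
  let ?n = "normal_density 0 (sqrt (s\<^sup>2 / 2))"
  let ?left = "\<lambda>v. indicator {..<y} v * exp (- l * (y - v)) * ?n v"
  let ?right = "\<lambda>v. indicator {y<..} v * exp (- l * (v - y)) * ?n v"
  have ae: "AE v in lborel. ennreal (laplace_density l (y - v)) * ennreal (?n v)
      = ennreal (l / 2) * (ennreal (?left v) + ennreal (?right v))"
    using AE_lborel_singleton[of y]
  proof eventually_elim
    case (elim v)
    then have "laplace_density l (y - v) * ?n v = l / 2 * (?left v + ?right v)"
      by (auto simp: laplace_density_def indicator_def abs_if algebra_simps)
    moreover have "0 \<le> laplace_density l (y - v)" "0 \<le> ?left v" "0 \<le> ?right v"
      using l by (simp_all add: laplace_density_nonneg)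
    ultimately show ?case
      using l by (metis ennreal_mult ennreal_plus add_nonneg_nonneg divide_nonneg_nonneg
          less_imp_le normal_density_nonneg zero_le_numeral)
  qed
  have "(\<integral>\<^sup>+v. ennreal (laplace_density l (y - v)) * ennreal (?n v) \<partial>lborel)
      = ennreal (l / 2) * ((\<integral>\<^sup>+v. ennreal (?left v) \<partial>lborel) + (\<integral>\<^sup>+v. ennreal (?right v) \<partial>lborel))"
    by (simp add: nn_integral_cong_AE[OF ae] nn_integral_cmult nn_integral_add)
  also have "\<dots> = ennreal (l / 2) * (ennreal (exp (- l * y) * exp ((l * s / 2)\<^sup>2) / 2 * (1 - erf (l * s / 2 - y / s)))
      + ennreal (exp (l * y) * exp ((l * s / 2)\<^sup>2) / 2 * (1 - erf (l * s / 2 + y / s))))"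
    by (simp only: nn_integral_exp_tail_normal[OF s] nn_integral_exp_tail_normal_left[OF s])
  also have "\<dots> = ennreal (laplace_normal_density l s y)"
  proof -
    have "0 \<le> exp (- l * y) * exp ((l * s / 2)\<^sup>2) / 2 * (1 - erf (l * s / 2 - y / s))"
         "0 \<le> exp (l * y) * exp ((l * s / 2)\<^sup>2) / 2 * (1 - erf (l * s / 2 + y / s))"
      using erf_le_one[of "l * s / 2 - y / s"] erf_le_one[of "l * s / 2 + y / s"] by simp_all
    moreover have "laplace_normal_density l s y = l / 2 * (exp (- l * y) * exp ((l * s / 2)\<^sup>2) / 2
        * (1 - erf (l * s / 2 - y / s)) + exp (l * y) * exp ((l * s / 2)\<^sup>2) / 2 * (1 - erf (l * s / 2 + y / s)))"
      by (simp add: laplace_normal_density_def field_simps)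
    ultimately show ?thesis
      using l by (metis ennreal_mult ennreal_plus add_nonneg_nonneg divide_nonneg_nonneg less_imp_le
          zero_le_numeral)
  qed
  finally show ?thesis .
qed

lemma char_normal_density:
  assumes s: "s > 0"
  shows "char (density lborel (\<lambda>x. ennreal (normal_density 0 s x))) t = complex_of_real (exp (- (s * t)\<^sup>2 / 2))"
proof -
  have scale: "normal_density 0 s (s * u) = std_normal_density u / s" for u
    using s by (simp add: normal_density_def power_mult_distrib real_sqrt_mult field_simps)
  have "char (density lborel (\<lambda>x. ennreal (normal_density 0 s x))) t
      = (\<integral>x. normal_density 0 s x *\<^sub>R iexp (t * x) \<partial>lborel)"
    unfolding char_def by (rule integral_density) auto
  also have "\<dots> = \<bar>s\<bar> *\<^sub>R (\<integral>u. normal_density 0 s (0 + s * u) *\<^sub>R iexp (t * (0 + s * u)) \<partial>lborel)"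
    using s by (intro lborel_integral_real_affine) simp
  also have "\<dots> = (\<integral>u. std_normal_density u *\<^sub>R iexp ((s * t) * u) \<partial>lborel)"
    unfolding integral_scaleR_right[symmetric]
  proof (intro Bochner_Integration.integral_cong refl)
    fix u
    show "\<bar>s\<bar> *\<^sub>R normal_density 0 s (0 + s * u) *\<^sub>R iexp (t * (0 + s * u))
        = std_normal_density u *\<^sub>R iexp ((s * t) * u)"
      using s by (simp only: add_0 scale abs_of_pos) (simp add: ac_simps)
  qed
  also have "\<dots> = char std_normal_distribution (s * t)"
    unfolding char_def by (rule integral_density[symmetric]) auto
  finally show ?thesis
    by (simp add: char_std_normal_distribution)
qed

lemma char_convolution:
  assumes A: "prob_space A" "sets A = sets borel" and B: "prob_space B" "sets B = sets borel"
  shows "char (A \<star> B) t = char A t * char B t"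
proof -
  interpret A: prob_space A by (rule A(1))
  interpret B: prob_space B by (rule B(1))
  interpret P: pair_prob_space A B ..
  have [measurable_cong]: "sets A = sets borel" "sets B = sets borel"
    using A B by auto
  have int: "integrable (A \<Otimes>\<^sub>M B) (\<lambda>p. iexp (t * fst p) * iexp (t * snd p))"
    by (rule P.integrable_const_bound[where B=1]) (auto simp: norm_mult)
  have "char (A \<star> B) t = (CLINT p|A \<Otimes>\<^sub>M B. iexp (t * fst p) * iexp (t * snd p))"
    unfolding char_def convolution_def
    by (subst integral_distr) (auto simp: case_prod_beta distrib_left exp_add[symmetric] algebra_simps)
  also have "\<dots> = (CLINT x|A. (CLINT y|B. iexp (t * x) * iexp (t * y)))"
    using P.integral_fst'[OF int] by simp
  also have "\<dots> = char A t * char B t"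
    unfolding char_def by simp
  finally show ?thesis .
qed

lemma laplace_normal_density_fourier:
  assumes l: "l > 0" and s: "s > 0"
  shows integrable_laplace_normal_density_iexp:
      "integrable lborel (\<lambda>y. laplace_normal_density l s y *\<^sub>R iexp (t * y))"
    and integral_laplace_normal_density_iexp:
      "(\<integral>y. laplace_normal_density l s y *\<^sub>R iexp (t * y) \<partial>lborel)
         = complex_of_real (l\<^sup>2 / (l\<^sup>2 + t\<^sup>2) * exp (- (s\<^sup>2 * t\<^sup>2) / 4))"
proof -
  let ?L = "density lborel (\<lambda>x. ennreal (laplace_density l x))"
  let ?N = "density lborel (\<lambda>x. ennreal (normal_density 0 (sqrt (s\<^sup>2 / 2)) x))"
  have s': "sqrt (s\<^sup>2 / 2) > 0"
    using s by simp
  interpret L: prob_space ?L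
    by (rule prob_space_laplace_density[OF l])
  interpret N: prob_space ?N
    by (rule prob_space_normal_density[OF s'])
  have conv: "?L \<star> ?N = density lborel (\<lambda>y. ennreal (laplace_normal_density l s y))"
    by (subst convolution_density) (auto simp: laplace_convolution_normal_density[OF s l]
        intro: L.finite_measure_axioms N.finite_measure_axioms)
  interpret LN: pair_prob_space ?L ?N ..
  interpret C: prob_space "?L \<star> ?N"
    unfolding convolution_def by (rule LN.prob_space_distr) simp
  have "integrable (?L \<star> ?N) (\<lambda>y. iexp (t * y))"
    by (rule C.integrable_iexp) auto
  then show "integrable lborel (\<lambda>y. laplace_normal_density l s y *\<^sub>R iexp (t * y))"
    unfolding conv using l by (subst (asm) integrable_density) (auto simp: laplace_normal_density_nonneg)
  have "char (?L \<star> ?N) t = char ?L t * char ?N t"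
    by (rule char_convolution) (auto intro: L.prob_space_axioms N.prob_space_axioms)
  also have "\<dots> = complex_of_real (l\<^sup>2 / (l\<^sup>2 + t\<^sup>2) * exp (- (s\<^sup>2 * t\<^sup>2) / 4))"
    using s by (simp add: char_laplace_density[OF l] char_normal_density[OF s'] power_mult_distrib)
  finally show "(\<integral>y. laplace_normal_density l s y *\<^sub>R iexp (t * y) \<partial>lborel)
      = complex_of_real (l\<^sup>2 / (l\<^sup>2 + t\<^sup>2) * exp (- (s\<^sup>2 * t\<^sup>2) / 4))"
    unfolding char_def conv using l by (subst (asm) integral_density) (auto simp: laplace_normal_density_nonneg)
qed

section \<open>Identifying a distribution by its characteristic function\<close>

lemma (in prob_space) char_distributed:
  assumes "distributed M lborel X f"
  shows "(CLINT \<omega>|M. iexp (t * X \<omega>)) = char (density lborel f) t"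
proof -
  have [measurable]: "X \<in> borel_measurable M"
    using distributed_measurable[OF assms] by simp
  show ?thesis
    unfolding char_def distributed_distr_eq_density[OF assms, symmetric] by (simp add: integral_distr)
qed

lemma (in prob_space) distributed_if_char_eq:
  fixes X :: "'a \<Rightarrow> real"
  assumes X[measurable]: "X \<in> borel_measurable M"
    and f[measurable]: "f \<in> borel_measurable borel" "\<And>x. 0 \<le> f x"
    and prob: "prob_space (density lborel (\<lambda>x. ennreal (f x)))"
    and char_eq: "\<And>t. (CLINT \<omega>|M. iexp (t * X \<omega>)) = char (density lborel (\<lambda>x. ennreal (f x))) t"
  shows "distributed M lborel X (\<lambda>x. ennreal (f x))"
proof -
  have "distr M borel X = density lborel (\<lambda>x. ennreal (f x))"
  proof (rule Levy_uniqueness)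
    show "real_distribution (distr M borel X)"
      by simp
    show "real_distribution (density lborel (\<lambda>x. ennreal (f x)))"
      using prob by (simp add: real_distribution_def real_distribution_axioms_def)
    show "char (distr M borel X) = char (density lborel (\<lambda>x. ennreal (f x)))"
    proof
      fix t
      have "char (distr M borel X) t = (CLINT \<omega>|M. iexp (t * X \<omega>))"
        unfolding char_def by (rule integral_distr) auto
      then show "char (distr M borel X) t = char (density lborel (\<lambda>x. ennreal (f x))) t"
        by (simp only: char_eq)
    qed
  qed
  moreover have "distr M lborel X = distr M borel X"
    by (rule distr_cong) auto
  ultimately show ?thesis
    unfolding distributed_def by simp
qed

lemma (in prob_space) char_sum_indep_add:
  fixes Z :: "'i \<Rightarrow> 'a \<Rightarrow> real" and W :: "'a \<Rightarrow> real"
  assumes I: "finite I" and indZ: "indep_vars (\<lambda>_. borel) Z I"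
    and indW: "indep_var borel (\<lambda>\<omega>. \<Sum>i\<in>I. Z i \<omega>) borel W"
  shows "(CLINT \<omega>|M. iexp (t * ((\<Sum>i\<in>I. Z i \<omega>) + W \<omega>)))
       = (\<Prod>i\<in>I. CLINT \<omega>|M. iexp (t * Z i \<omega>)) * (CLINT \<omega>|M. iexp (t * W \<omega>))"
proof -
  have [measurable]: "Z i \<in> borel_measurable M" if "i \<in> I" for i
    using indZ that unfolding indep_vars_def by auto
  have [measurable]: "W \<in> borel_measurable M"
    using indep_var_rv2[OF indW] by simp
  have indZ': "indep_vars (\<lambda>_. borel) (\<lambda>i \<omega>. iexp (t * Z i \<omega>)) I"
    by (rule indep_vars_compose2[OF indZ]) simp
  have indW': "indep_var borel (\<lambda>\<omega>. iexp (t * (\<Sum>i\<in>I. Z i \<omega>))) borel (\<lambda>\<omega>. iexp (t * W \<omega>))"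
    using indep_var_compose[OF indW, of "\<lambda>r. iexp (t * r)" borel "\<lambda>r. iexp (t * r)" borel]
    by (simp add: comp_def)
  have "(CLINT \<omega>|M. iexp (t * ((\<Sum>i\<in>I. Z i \<omega>) + W \<omega>)))
      = (CLINT \<omega>|M. iexp (t * (\<Sum>i\<in>I. Z i \<omega>)) * iexp (t * W \<omega>))"
    by (simp add: distrib_left exp_add)
  also have "\<dots> = (CLINT \<omega>|M. iexp (t * (\<Sum>i\<in>I. Z i \<omega>))) * (CLINT \<omega>|M. iexp (t * W \<omega>))"
    by (rule indep_var_lebesgue_integral[OF indW']) (rule integrable_iexp; simp)+
  also have "(CLINT \<omega>|M. iexp (t * (\<Sum>i\<in>I. Z i \<omega>))) = (CLINT \<omega>|M. (\<Prod>i\<in>I. iexp (t * Z i \<omega>)))"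
    using I by (simp add: sum_distrib_left exp_sum)
  also have "\<dots> = (\<Prod>i\<in>I. CLINT \<omega>|M. iexp (t * Z i \<omega>))"
    by (rule indep_vars_lebesgue_integral[OF I indZ']) (auto intro!: integrable_iexp)
  finally show ?thesis .
qed

lemma real_distribution_density:
  fixes g :: "real \<Rightarrow> real"
  assumes [measurable]: "g \<in> borel_measurable borel" and "\<And>x. 0 \<le> g x" "integrable lborel g"
    and "integral\<^sup>L lborel g = 1"
  shows "real_distribution (density lborel (\<lambda>x. ennreal (g x)))"
proof -
  have "prob_space (density lborel (\<lambda>x. ennreal (g x)))"
    by standard (use assms in \<open>simp add: emeasure_density nn_integral_eq_integral\<close>)
  then show ?thesis
    by (simp add: real_distribution_def real_distribution_axioms_def)
qed

lemma char_density_eq_fourier: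
  fixes g :: "real \<Rightarrow> real"
  assumes "g \<in> borel_measurable borel" "\<And>x. 0 \<le> g x"
  shows "char (density lborel (\<lambda>x. ennreal (g x))) t = (\<integral>y. g y *\<^sub>R iexp (t * y) \<partial>lborel)"
  unfolding char_def using assms by (subst integral_density) auto

lemma integrable_scaleR_iexp:
  fixes g :: "real \<Rightarrow> real"
  assumes "integrable lborel g"
  shows "integrable lborel (\<lambda>y. g y *\<^sub>R iexp (t * y))"
  by (rule Bochner_Integration.integrable_bound[OF assms]) (use borel_measurable_integrable[OF assms] in auto)

lemma char_density_divide:
  fixes g :: "real \<Rightarrow> real"
  assumes [measurable]: "g \<in> borel_measurable borel" and "\<And>x. 0 \<le> g x" and c: "c > 0"
  shows "char (density lborel (\<lambda>x. ennreal (g x / c))) t = (1 / c) *\<^sub>R (\<integral>y. g y *\<^sub>R iexp (t * y) \<partial>lborel)"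
proof -
  have "char (density lborel (\<lambda>x. ennreal (g x / c))) t = (\<integral>y. (g y / c) *\<^sub>R iexp (t * y) \<partial>lborel)"
    by (rule char_density_eq_fourier) (use assms in auto)
  also have "\<dots> = (\<integral>y. (1 / c) *\<^sub>R (g y *\<^sub>R iexp (t * y)) \<partial>lborel)"
    by (rule Bochner_Integration.integral_cong) auto
  finally show ?thesis
    by (simp only: integral_scaleR_right)
qed

text \<open>Normalised to probability densities, the two functions have the same characteristic function,
  so Levy's uniqueness theorem applies.\<close>

lemma AE_eq_if_fourier_eq_nonneg:
  fixes g1 g2 :: "real \<Rightarrow> real"
  assumes g1[measurable]: "g1 \<in> borel_measurable borel" "\<And>x. 0 \<le> g1 x" "integrable lborel g1"
    and g2[measurable]: "g2 \<in> borel_measurable borel" "\<And>x. 0 \<le> g2 x" "integrable lborel g2"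
    and fourier: "\<And>t. (\<integral>y. g1 y *\<^sub>R iexp (t * y) \<partial>lborel) = (\<integral>y. g2 y *\<^sub>R iexp (t * y) \<partial>lborel)"
  shows "AE y in lborel. g1 y = g2 y"
proof -
  define c where "c = integral\<^sup>L lborel g1"
  have c2: "integral\<^sup>L lborel g2 = c"
    using fourier[of 0] unfolding c_def by (simp add: scaleR_conv_of_real)
  have "c \<ge> 0"
    unfolding c_def using g1 by simp
  show ?thesis
  proof (cases "c = 0")
    case True
    have "AE y in lborel. g1 y = 0"
      using g1 True unfolding c_def by (simp add: integral_nonneg_eq_0_iff_AE)
    moreover have "AE y in lborel. g2 y = 0"
      using g2 True c2 by (simp add: integral_nonneg_eq_0_iff_AE)
    ultimately show ?thesis
      by eventually_elim simp
  next
    case False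
    with \<open>c \<ge> 0\<close> have c: "c > 0"
      by simp
    have "density lborel (\<lambda>x. ennreal (g1 x / c)) = density lborel (\<lambda>x. ennreal (g2 x / c))"
    proof (rule Levy_uniqueness)
      show "real_distribution (density lborel (\<lambda>x. ennreal (g1 x / c)))"
        using g1 c by (intro real_distribution_density) (auto simp: c_def)
      show "real_distribution (density lborel (\<lambda>x. ennreal (g2 x / c)))"
        using g2 c c2 by (intro real_distribution_density) auto
      show "char (density lborel (\<lambda>x. ennreal (g1 x / c))) = char (density lborel (\<lambda>x. ennreal (g2 x / c)))"
        by (rule ext) (simp only: char_density_divide[OF g1(1,2) c] char_density_divide[OF g2(1,2) c] fourier)
    qed
    then have "AE y in lborel. ennreal (g1 y / c) = ennreal (g2 y / c)"
      by (rule sigma_finite_measure.density_unique[OF sigma_finite_lborel, rotated 2]) auto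
    then show ?thesis
    proof (rule eventually_mono)
      fix y
      assume "ennreal (g1 y / c) = ennreal (g2 y / c)"
      then show "g1 y = g2 y"
        using g1(2)[of y] g2(2)[of y] c by simp
    qed
  qed
qed

lemma AE_eq_if_fourier_eq:
  fixes p f :: "real \<Rightarrow> real"
  assumes p[measurable]: "p \<in> borel_measurable borel" "\<And>x. 0 \<le> p x" "integrable lborel p"
    and f[measurable]: "f \<in> borel_measurable borel" "integrable lborel f"
    and fourier: "\<And>t. (\<integral>y. p y *\<^sub>R iexp (t * y) \<partial>lborel) = (\<integral>y. f y *\<^sub>R iexp (t * y) \<partial>lborel)"
  shows "AE y in lborel. p y = f y"
proof -
  define fp where "fp y = max (f y) 0" for y
  define fn where "fn y = max (- f y) 0" for y
  have [measurable]: "fp \<in> borel_measurable borel" "fn \<in> borel_measurable borel"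
    unfolding fp_def fn_def by measurable
  have int: "integrable lborel fp" "integrable lborel fn"
    unfolding fp_def fn_def using f by (auto intro: integrable_max)
  have f_split: "f y = fp y - fn y" for y
    unfolding fp_def fn_def by auto
  have nonneg: "0 \<le> fp y" "0 \<le> fn y" for y
    unfolding fp_def fn_def by auto
  \<comment> \<open>Moving the negative part of \<open>f\<close> to the other side leaves two nonnegative functions.\<close>
  have "AE y in lborel. p y + fn y = fp y"
  proof (rule AE_eq_if_fourier_eq_nonneg)
    show "integrable lborel (\<lambda>y. p y + fn y)"
      using p int by simp
    fix t
    have "(\<integral>y. (p y + fn y) *\<^sub>R iexp (t * y) \<partial>lborel)
        = (\<integral>y. p y *\<^sub>R iexp (t * y) \<partial>lborel) + (\<integral>y. fn y *\<^sub>R iexp (t * y) \<partial>lborel)"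
      unfolding scaleR_add_left
      by (rule Bochner_Integration.integral_add; rule integrable_scaleR_iexp) (use p int in auto)
    also have "\<dots> = (\<integral>y. fp y *\<^sub>R iexp (t * y) \<partial>lborel)"
    proof -
      have "(\<integral>y. f y *\<^sub>R iexp (t * y) \<partial>lborel)
          = (\<integral>y. fp y *\<^sub>R iexp (t * y) \<partial>lborel) - (\<integral>y. fn y *\<^sub>R iexp (t * y) \<partial>lborel)"
        unfolding f_split scaleR_diff_left
        by (rule Bochner_Integration.integral_diff; rule integrable_scaleR_iexp) (use int in auto)
      then show ?thesis
        by (simp only: fourier diff_add_cancel)
    qed
    finally show "(\<integral>y. (p y + fn y) *\<^sub>R iexp (t * y) \<partial>lborel) = (\<integral>y. fp y *\<^sub>R iexp (t * y) \<partial>lborel)" .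
  qed (use p int nonneg in auto)
  then show ?thesis
    by eventually_elim (use p(2) in \<open>auto simp: fp_def fn_def split: if_splits\<close>)
qed

lemma convolution_normal_density:
  fixes P :: "real measure"
  assumes P: "prob_space P" "sets P = sets borel" and s: "s > 0"
  shows "P \<star> density lborel (\<lambda>x. ennreal (normal_density 0 s x))
       = density lborel (\<lambda>z. \<integral>\<^sup>+x. ennreal (normal_density 0 s (z - x)) \<partial>P)"
    (is "_ \<star> ?N = density lborel ?q")
proof (rule measure_eqI)
  interpret P: prob_space P
    by (rule P(1))
  interpret N: prob_space ?N
    by (rule prob_space_normal_density[OF s])
  interpret PL: pair_sigma_finite P lborel
    by (intro pair_sigma_finite.intro P.sigma_finite_measure_axioms sigma_finite_lborel)
  have [measurable_cong]: "sets P = sets borel"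
    by (rule P(2))
  show "sets (P \<star> ?N) = sets (density lborel ?q)"
    by simp
  fix A
  assume "A \<in> sets (P \<star> ?N)"
  then have A[measurable]: "A \<in> sets borel"
    by simp
  have "sets (P \<Otimes>\<^sub>M lborel) = sets (borel \<Otimes>\<^sub>M (borel :: real measure))"
    using P(2) by (intro sets_pair_measure_cong) auto
  moreover have "(\<lambda>(x, z). ennreal (normal_density 0 s (z - x)) * indicator A z)
      \<in> borel_measurable (borel \<Otimes>\<^sub>M (borel :: real measure))"
    by measurable
  ultimately have joint_measurable: "(\<lambda>(x, z). ennreal (normal_density 0 s (z - x)) * indicator A z)
      \<in> borel_measurable (P \<Otimes>\<^sub>M lborel)"
    using measurable_cong_sets by blast
  have "emeasure (P \<star> ?N) A = \<integral>\<^sup>+x. \<integral>\<^sup>+y. indicator A (x + y) \<partial>?N \<partial>P"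
    using P(2) by (intro convolution_emeasure') (auto intro: P.finite_measure_axioms N.finite_measure_axioms)
  also have "\<dots> = \<integral>\<^sup>+x. \<integral>\<^sup>+z. ennreal (normal_density 0 s (z - x)) * indicator A z \<partial>lborel \<partial>P"
  proof (intro nn_integral_cong)
    fix x
    have "(\<integral>\<^sup>+y. indicator A (x + y) \<partial>?N) = (\<integral>\<^sup>+y. ennreal (normal_density 0 s y) * indicator A (x + y) \<partial>lborel)"
      by (subst nn_integral_density) auto
    also have "\<dots> = ennreal \<bar>1\<bar> * (\<integral>\<^sup>+z. ennreal (normal_density 0 s (- x + 1 * z)) * indicator A (x + (- x + 1 * z)) \<partial>lborel)"
      by (rule nn_integral_real_affine) auto
    finally show "(\<integral>\<^sup>+y. indicator A (x + y) \<partial>?N) = (\<integral>\<^sup>+z. ennreal (normal_density 0 s (z - x)) * indicator A z \<partial>lborel)"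
      by simp
  qed
  also have "\<dots> = \<integral>\<^sup>+z. \<integral>\<^sup>+x. ennreal (normal_density 0 s (z - x)) * indicator A z \<partial>P \<partial>lborel"
    by (rule PL.Fubini'[symmetric, OF joint_measurable])
  also have "\<dots> = emeasure (density lborel ?q) A"
    by (simp add: emeasure_density nn_integral_multc)
  finally show "emeasure (P \<star> ?N) A = emeasure (density lborel ?q) A" .
qed

lemma (in prob_space) distr_add_indep_normal_has_density:
  assumes X[measurable]: "X \<in> borel_measurable M"
    and W: "distributed M lborel W (\<lambda>x. ennreal (normal_density 0 s x))" and s: "s > 0"
    and ind: "indep_var borel X borel W"
  obtains p where "p \<in> borel_measurable borel" "\<And>x. 0 \<le> p x"
    "distr M lborel (\<lambda>\<omega>. X \<omega> + W \<omega>) = density lborel (\<lambda>x. ennreal (p x))"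
proof -
  let ?PX = "distr M lborel X"
  define q where "q z = (\<integral>\<^sup>+x. ennreal (normal_density 0 s (z - x)) \<partial>?PX)" for z
  have [measurable]: "W \<in> borel_measurable M"
    using distributed_measurable[OF W] by simp
  interpret PX: prob_space ?PX
    by (rule prob_space_distr) simp
  have "sets (lborel \<Otimes>\<^sub>M ?PX) = sets ((borel :: real measure) \<Otimes>\<^sub>M borel)"
    by (intro sets_pair_measure_cong) auto
  moreover have "(\<lambda>(z, x). ennreal (normal_density 0 s (z - x))) \<in> borel_measurable ((borel :: real measure) \<Otimes>\<^sub>M borel)"
    by measurable
  ultimately have "(\<lambda>(z, x). ennreal (normal_density 0 s (z - x))) \<in> borel_measurable (lborel \<Otimes>\<^sub>M ?PX)"
    using measurable_cong_sets by blast
  then have "(\<lambda>z. \<integral>\<^sup>+x. ennreal (normal_density 0 s (z - x)) \<partial>?PX) \<in> borel_measurable lborel"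
    by (rule PX.borel_measurable_nn_integral)
  then have [measurable]: "q \<in> borel_measurable borel"
    unfolding q_def by simp
  have bound: "normal_density 0 s y \<le> 1 / sqrt (2 * pi * s\<^sup>2)" for y
    using mult_left_mono[of "exp (- (y - 0)\<^sup>2 / (2 * s\<^sup>2))" 1 "1 / sqrt (2 * pi * s\<^sup>2)"]
    unfolding normal_density_def by simp
  have q_finite: "q z \<noteq> \<top>" for z
  proof -
    have "q z \<le> (\<integral>\<^sup>+x. ennreal (1 / sqrt (2 * pi * s\<^sup>2)) \<partial>?PX)"
      unfolding q_def by (intro nn_integral_mono ennreal_leI bound)
    also have "\<dots> < \<top>"
      using PX.emeasure_space_1 by simp
    finally show ?thesis
      by (simp add: less_top)
  qed
  have "distr M lborel (\<lambda>\<omega>. X \<omega> + W \<omega>) = (?PX \<star> distr M lborel W)"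
    by (rule sum_indep_random_variable_lborel[OF ind]) auto
  also have "\<dots> = density lborel q"
    unfolding distributed_distr_eq_density[OF W] q_def using s PX.prob_space_axioms by (intro convolution_normal_density) auto
  also have "\<dots> = density lborel (\<lambda>x. ennreal (enn2real (q x)))"
    using q_finite by (simp add: ennreal_enn2real_if)
  finally show ?thesis
    by (intro that[of "\<lambda>x. enn2real (q x)"]) auto
qed

text \<open>The candidate density \<open>f\<close> is not known to be nonnegative, so Levy's theorem cannot be
  applied to it directly; it is compared instead with the density of \<open>X + W\<close>, which exists thanks
  to the Gaussian noise.\<close>

lemma (in prob_space) distributed_add_indep_normal_if_fourier_eq:
  fixes X W :: "'a \<Rightarrow> real" and f :: "real \<Rightarrow> real"
  assumes X[measurable]: "X \<in> borel_measurable M"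
    and W: "distributed M lborel W (\<lambda>x. ennreal (normal_density 0 s x))" and s: "s > 0"
    and ind: "indep_var borel X borel W"
    and f[measurable]: "f \<in> borel_measurable borel" "integrable lborel f"
    and fourier: "\<And>t. (CLINT \<omega>|M. iexp (t * (X \<omega> + W \<omega>))) = (\<integral>y. f y *\<^sub>R iexp (t * y) \<partial>lborel)"
  shows "distributed M lborel (\<lambda>\<omega>. X \<omega> + W \<omega>) (\<lambda>y. ennreal (f y))"
proof -
  have [measurable]: "W \<in> borel_measurable M"
    using distributed_measurable[OF W] by simp
  obtain p where p[measurable]: "p \<in> borel_measurable borel" and p_nonneg: "\<And>x. 0 \<le> p x"
    and dp: "distr M lborel (\<lambda>\<omega>. X \<omega> + W \<omega>) = density lborel (\<lambda>x. ennreal (p x))"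
    using distr_add_indep_normal_has_density[OF X W s ind] by blast
  interpret D: prob_space "density lborel (\<lambda>x. ennreal (p x))"
    unfolding dp[symmetric] by (rule prob_space_distr) simp
  have "(\<integral>\<^sup>+x. ennreal (p x) \<partial>lborel) = 1"
    using D.emeasure_space_1 by (simp add: emeasure_density)
  then have p_int: "integrable lborel p"
    using p_nonneg by (intro integrableI_nn_integral_finite) auto
  have "AE y in lborel. p y = f y"
  proof (rule AE_eq_if_fourier_eq[OF p p_nonneg p_int f])
    fix t
    have "(\<integral>y. p y *\<^sub>R iexp (t * y) \<partial>lborel) = char (density lborel (\<lambda>x. ennreal (p x))) t"
      by (rule char_density_eq_fourier[symmetric]) (use p_nonneg in auto)
    also have "\<dots> = (CLINT \<omega>|M. iexp (t * (X \<omega> + W \<omega>)))"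
      unfolding char_def dp[symmetric] by (rule integral_distr) auto
    finally show "(\<integral>y. p y *\<^sub>R iexp (t * y) \<partial>lborel) = (\<integral>y. f y *\<^sub>R iexp (t * y) \<partial>lborel)"
      by (simp only: fourier)
  qed
  then have "density lborel (\<lambda>x. ennreal (p x)) = density lborel (\<lambda>x. ennreal (f x))"
    by (intro density_cong) (auto elim: eventually_mono)
  then show ?thesis
    unfolding distributed_def using dp by simp
qed

section \<open>Circularly-symmetric complex Gaussians\<close>

lemma normal_density_mult_exp_neg_square:
  assumes s: "s > 0" and k: "k \<ge> 0"
  shows "normal_density 0 s x * exp (- k * x\<^sup>2)
       = normal_density 0 (s / sqrt (1 + 2 * k * s\<^sup>2)) x / sqrt (1 + 2 * k * s\<^sup>2)"
proof -
  define q where "q = 1 + 2 * k * s\<^sup>2"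
  have q: "q > 0"
    using s k unfolding q_def by (simp add: add_pos_nonneg)
  have "- x\<^sup>2 / (2 * s\<^sup>2) + - k * x\<^sup>2 = - x\<^sup>2 / (2 * (s / sqrt q)\<^sup>2)"
    using s q by (simp add: q_def power_divide field_simps)
  then have "exp (- x\<^sup>2 / (2 * s\<^sup>2)) * exp (- k * x\<^sup>2) = exp (- x\<^sup>2 / (2 * (s / sqrt q)\<^sup>2))"
    by (simp only: exp_add[symmetric])
  moreover have "sqrt (2 * pi * (s / sqrt q)\<^sup>2) = sqrt (2 * pi * s\<^sup>2) / sqrt q"
    using q by (simp add: power_divide real_sqrt_divide real_sqrt_mult)
  ultimately show ?thesis
    using q unfolding normal_density_def q_def[symmetric] by (simp add: field_simps)
qed

lemma (in prob_space) expectation_exp_neg_square_normal: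
  assumes X: "distributed M lborel X (\<lambda>t. ennreal (normal_density 0 s t))" and s: "s > 0" and k: "k \<ge> 0"
  shows "(\<integral>\<omega>. exp (- k * (X \<omega>)\<^sup>2) \<partial>M) = 1 / sqrt (1 + 2 * k * s\<^sup>2)"
proof -
  have s': "s / sqrt (1 + 2 * k * s\<^sup>2) > 0"
    using s k by (simp add: add_pos_nonneg)
  have "(\<integral>\<omega>. exp (- k * (X \<omega>)\<^sup>2) \<partial>M) = (\<integral>x. normal_density 0 s x * exp (- k * x\<^sup>2) \<partial>lborel)"
    by (rule distributed_integral[OF X, symmetric]) auto
  also have "\<dots> = (\<integral>x. normal_density 0 (s / sqrt (1 + 2 * k * s\<^sup>2)) x \<partial>lborel) / sqrt (1 + 2 * k * s\<^sup>2)"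
    by (simp only: normal_density_mult_exp_neg_square[OF s k] integral_divide_zero)
  also have "\<dots> = 1 / sqrt (1 + 2 * k * s\<^sup>2)"
    using s' by simp
  finally show ?thesis .
qed

lemma CN_rv_components:
  assumes "CN_rv M s2 X"
  shows "X \<in> borel_measurable M"
    and "distributed M lborel (\<lambda>\<omega>. Re (X \<omega>)) (\<lambda>t. ennreal (normal_density 0 (sqrt (s2 / 2)) t))"
    and "distributed M lborel (\<lambda>\<omega>. Im (X \<omega>)) (\<lambda>t. ennreal (normal_density 0 (sqrt (s2 / 2)) t))"
    and "prob_space.indep_var M borel (\<lambda>\<omega>. Re (X \<omega>)) borel (\<lambda>\<omega>. Im (X \<omega>))"
  using assms unfolding CN_rv_def by auto

lemma (in prob_space) CN_char_Re_mult:
  assumes h: "CN_rv M s2 h" and s2: "s2 > 0"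
  shows "(CLINT \<omega>|M. iexp (t * Re (h \<omega> * c))) = complex_of_real (exp (- (s2 * t\<^sup>2 / 4) * (cmod c)\<^sup>2))"
proof -
  note h_comp = CN_rv_components[OF h]
  have [measurable]: "h \<in> borel_measurable M"
    by (rule h_comp(1))
  have s: "sqrt (s2 / 2) > 0"
    using s2 by simp
  have char_comp: "(CLINT \<omega>|M. iexp (r * Y \<omega>)) = complex_of_real (exp (- s2 * r\<^sup>2 / 4))"
    if "distributed M lborel Y (\<lambda>t. ennreal (normal_density 0 (sqrt (s2 / 2)) t))" for r and Y
    unfolding char_distributed[OF that] char_normal_density[OF s] using s2 by (simp add: power_mult_distrib)
  have ind: "indep_var borel (\<lambda>\<omega>. iexp ((t * Re c) * Re (h \<omega>))) borel (\<lambda>\<omega>. iexp ((- t * Im c) * Im (h \<omega>)))"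
    using indep_var_compose[OF h_comp(4), of "\<lambda>r. iexp ((t * Re c) * r)" borel "\<lambda>r. iexp ((- t * Im c) * r)" borel]
    by (simp add: comp_def)
  have "(CLINT \<omega>|M. iexp (t * Re (h \<omega> * c)))
      = (CLINT \<omega>|M. iexp ((t * Re c) * Re (h \<omega>)) * iexp ((- t * Im c) * Im (h \<omega>)))"
    by (simp add: exp_add[symmetric] algebra_simps)
  also have "\<dots> = (CLINT \<omega>|M. iexp ((t * Re c) * Re (h \<omega>))) * (CLINT \<omega>|M. iexp ((- t * Im c) * Im (h \<omega>)))"
    by (rule indep_var_lebesgue_integral[OF ind]) (rule integrable_iexp; simp)+
  also have "\<dots> = exp (- (s2 * t\<^sup>2 / 4) * (cmod c)\<^sup>2)"
    unfolding char_comp[OF h_comp(2)] char_comp[OF h_comp(3)]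
    by (simp add: cmod_power2 exp_add[symmetric] power_mult_distrib algebra_simps flip: of_real_mult)
  finally show ?thesis .
qed

lemma (in prob_space) CN_expectation_exp_neg_norm_square:
  assumes x: "CN_rv M s2 x" and s2: "s2 > 0" and k: "k \<ge> 0"
  shows "(\<integral>\<omega>. exp (- k * (cmod (x \<omega>))\<^sup>2) \<partial>M) = 1 / (1 + k * s2)"
proof -
  note x_comp = CN_rv_components[OF x]
  have [measurable]: "x \<in> borel_measurable M"
    by (rule x_comp(1))
  have s: "sqrt (s2 / 2) > 0"
    using s2 by simp
  have ind: "indep_var borel (\<lambda>\<omega>. exp (- k * (Re (x \<omega>))\<^sup>2)) borel (\<lambda>\<omega>. exp (- k * (Im (x \<omega>))\<^sup>2))"
    using indep_var_compose[OF x_comp(4), of "\<lambda>r. exp (- k * r\<^sup>2)" borel "\<lambda>r. exp (- k * r\<^sup>2)" borel]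
    by (simp add: comp_def)
  have bounded: "integrable M (\<lambda>\<omega>. exp (- k * (g \<omega>)\<^sup>2))" if [measurable]: "g \<in> borel_measurable M" for g
    by (rule integrable_const_bound[where B=1]) (use k in auto)
  have "(\<integral>\<omega>. exp (- k * (cmod (x \<omega>))\<^sup>2) \<partial>M)
      = (\<integral>\<omega>. exp (- k * (Re (x \<omega>))\<^sup>2) * exp (- k * (Im (x \<omega>))\<^sup>2) \<partial>M)"
    by (simp add: cmod_power2 exp_add[symmetric] algebra_simps)
  also have "\<dots> = (\<integral>\<omega>. exp (- k * (Re (x \<omega>))\<^sup>2) \<partial>M) * (\<integral>\<omega>. exp (- k * (Im (x \<omega>))\<^sup>2) \<partial>M)"
    by (rule indep_var_lebesgue_integral[OF ind]) (rule bounded; simp)+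
  also have "\<dots> = 1 / (1 + k * s2)"
    unfolding expectation_exp_neg_square_normal[OF x_comp(2) s k] expectation_exp_neg_square_normal[OF x_comp(3) s k]
    using k s2 by (simp add: add_pos_nonneg)
  finally show ?thesis .
qed

lemma (in prob_space) CN_product_char:
  assumes h: "CN_rv M sh2 h" and x: "CN_rv M sx2 x" and sh2: "sh2 > 0" and sx2: "sx2 > 0"
    and ind: "indep_var borel h borel x" and u: "cmod u = 1"
  shows "(CLINT \<omega>|M. iexp (t * Re (u * (h \<omega> * x \<omega>)))) = complex_of_real (1 / (1 + t\<^sup>2 * sh2 * sx2 / 4))"
proof -
  have [measurable]: "h \<in> borel_measurable M" "x \<in> borel_measurable M"
    using CN_rv_components(1) h x by auto
  let ?Dh = "distr M borel h" and ?Dx = "distr M borel x"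
  interpret Dh: prob_space ?Dh
    by (rule prob_space_distr) simp
  interpret Dx: prob_space ?Dx
    by (rule prob_space_distr) simp
  interpret D: pair_prob_space ?Dh ?Dx ..
  have joint: "?Dh \<Otimes>\<^sub>M ?Dx = distr M (borel \<Otimes>\<^sub>M borel) (\<lambda>\<omega>. (h \<omega>, x \<omega>))"
    using ind unfolding indep_var_distribution_eq by auto
  let ?f = "\<lambda>a b. iexp (t * Re (u * (a * b)))"
  have int: "integrable (?Dh \<Otimes>\<^sub>M ?Dx) (case_prod ?f)"
    by (rule D.integrable_const_bound[where B=1]) auto
  have k: "sh2 * t\<^sup>2 / 4 \<ge> 0"
    using sh2 by simp
  have "(CLINT \<omega>|M. iexp (t * Re (u * (h \<omega> * x \<omega>)))) = (CLINT p|?Dh \<Otimes>\<^sub>M ?Dx. case_prod ?f p)"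
    unfolding joint by (subst integral_distr) auto
  also have "\<dots> = (CLINT b|?Dx. (CLINT a|?Dh. ?f a b))"
    by (rule D.integral_snd[OF int, symmetric])
  also have "\<dots> = (CLINT b|?Dx. complex_of_real (exp (- (sh2 * t\<^sup>2 / 4) * (cmod b)\<^sup>2)))"
  proof (intro Bochner_Integration.integral_cong refl)
    fix b
    have "(CLINT a|?Dh. ?f a b) = (CLINT \<omega>|M. iexp (t * Re (h \<omega> * (u * b))))"
      by (subst integral_distr) (auto simp: ac_simps)
    also have "\<dots> = complex_of_real (exp (- (sh2 * t\<^sup>2 / 4) * (cmod b)\<^sup>2))"
      using CN_char_Re_mult[OF h sh2, of t "u * b"] u by (simp add: norm_mult)
    finally show "(CLINT a|?Dh. ?f a b) = complex_of_real (exp (- (sh2 * t\<^sup>2 / 4) * (cmod b)\<^sup>2))" .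
  qed
  also have "\<dots> = (\<integral>\<omega>. exp (- (sh2 * t\<^sup>2 / 4) * (cmod (x \<omega>))\<^sup>2) \<partial>M)"
    by (subst integral_complex_of_real) (subst integral_distr; simp)
  also have "\<dots> = 1 / (1 + (sh2 * t\<^sup>2 / 4) * sx2)"
    by (simp only: CN_expectation_exp_neg_norm_square[OF x sx2 k])
  finally show ?thesis
    by (simp add: algebra_simps)
qed

lemma (in prob_space) CN_product_laplace:
  assumes h: "CN_rv M (\<sigma>h\<^sup>2) h" and x: "CN_rv M (\<sigma>x\<^sup>2) x" and \<sigma>h: "\<sigma>h > 0" and \<sigma>x: "\<sigma>x > 0"
    and ind: "indep_var borel h borel x" and u: "cmod u = 1"
  shows "distributed M lborel (\<lambda>\<omega>. Re (u * (h \<omega> * x \<omega>)))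
           (\<lambda>y. ennreal (laplace_density (2 / (\<sigma>h * \<sigma>x)) y))"
proof -
  let ?l = "2 / (\<sigma>h * \<sigma>x)"
  have l: "?l > 0"
    using \<sigma>h \<sigma>x by simp
  have [measurable]: "h \<in> borel_measurable M" "x \<in> borel_measurable M"
    using CN_rv_components(1) h x by auto
  show ?thesis
  proof (rule distributed_if_char_eq)
    show "prob_space (density lborel (\<lambda>y. ennreal (laplace_density ?l y)))"
      by (rule prob_space_laplace_density[OF l])
    fix t
    have "(CLINT \<omega>|M. iexp (t * Re (u * (h \<omega> * x \<omega>)))) = complex_of_real (1 / (1 + t\<^sup>2 * \<sigma>h\<^sup>2 * \<sigma>x\<^sup>2 / 4))"
      using CN_product_char[OF h x _ _ ind u] \<sigma>h \<sigma>x by simp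
    also have "1 / (1 + t\<^sup>2 * \<sigma>h\<^sup>2 * \<sigma>x\<^sup>2 / 4) = ?l\<^sup>2 / (?l\<^sup>2 + t\<^sup>2)"
      using \<sigma>h \<sigma>x by (simp add: field_simps power2_eq_square)
    finally show "(CLINT \<omega>|M. iexp (t * Re (u * (h \<omega> * x \<omega>))))
        = char (density lborel (\<lambda>y. ennreal (laplace_density ?l y))) t"
      by (simp only: char_laplace_density[OF l])
  qed (use l in \<open>auto simp: laplace_density_nonneg\<close>)
qed

section \<open>The received sample\<close>

lemma ofdm_pdf_eq_sum_laplace_normal:
  assumes pos: "\<forall>i\<in>{a..b}. lam i > 0"
  shows "ofdm_pdf lam s a b y = (\<Sum>j\<in>{a..b}. \<Sum>n\<in>{a..b}.
     partial_fraction_coeff lam {a..b} j * partial_fraction_coeff lam {a..b} n / (lam j + lam n)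
       * (2 / lam j) * laplace_normal_density (lam j) s y)"
  unfolding ofdm_pdf_def sum_distrib_left
proof (intro sum.cong refl)
  fix j n
  assume "j \<in> {a..b}"
  then have "lam j \<noteq> 0"
    using pos by (metis less_irrefl)
  then have "2 / lam j * laplace_normal_density (lam j) s y = exp ((lam j * s / 2)\<^sup>2) * (1 / 2)
      * (exp (- lam j * y) * (1 - erf (lam j * s / 2 - y / s)) + exp (lam j * y) * (1 - erf (lam j * s / 2 + y / s)))"
    by (simp add: laplace_normal_density_def)
  then show "(\<Prod>i = a..b. lam i)\<^sup>2 *
      (exp ((lam j * s / 2)\<^sup>2) / ((\<Prod>k\<in>{a..b} - {j}. lam k - lam j) * (\<Prod>u\<in>{a..b} - {n}. lam u - lam n) * (lam j + lam n))
        * (1 / 2) * (exp (- lam j * y) * (1 - erf (lam j * s / 2 - y / s)) + exp (lam j * y) * (1 - erf (lam j * s / 2 + y / s))))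
    = partial_fraction_coeff lam {a..b} j * partial_fraction_coeff lam {a..b} n / (lam j + lam n)
       * (2 / lam j) * laplace_normal_density (lam j) s y"
    unfolding partial_fraction_coeff_def mult.assoc[of _ "2 / lam j"]
    by (simp only: power2_eq_square times_divide_eq_left times_divide_eq_right divide_divide_eq_left mult_ac)
qed

lemma ofdm_pdf_fourier:
  fixes lam :: "nat \<Rightarrow> real"
  assumes ab: "a \<le> b" and inj: "inj_on lam {a..b}" and pos: "\<forall>i\<in>{a..b}. lam i > 0" and s: "s > 0"
  shows integrable_ofdm_pdf_iexp: "integrable lborel (\<lambda>y. ofdm_pdf lam s a b y *\<^sub>R iexp (t * y))"
    and integral_ofdm_pdf_iexp: "(\<integral>y. ofdm_pdf lam s a b y *\<^sub>R iexp (t * y) \<partial>lborel)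
       = complex_of_real ((\<Prod>l\<in>{a..b}. (lam l)\<^sup>2 / ((lam l)\<^sup>2 + t\<^sup>2)) * exp (- (s\<^sup>2 * t\<^sup>2) / 4))"
proof -
  let ?S = "{a..b}"
  let ?c = "\<lambda>j n. partial_fraction_coeff lam ?S j * partial_fraction_coeff lam ?S n / (lam j + lam n) * (2 / lam j)"
  let ?g = "\<lambda>j y. laplace_normal_density (lam j) s y *\<^sub>R iexp (t * y)"
  have expand: "ofdm_pdf lam s a b y *\<^sub>R iexp (t * y) = (\<Sum>j\<in>?S. \<Sum>n\<in>?S. ?c j n *\<^sub>R ?g j y)" for y
    by (simp add: ofdm_pdf_eq_sum_laplace_normal[OF pos] scaleR_sum_left)
  have int: "integrable lborel (?g j)" if "j \<in> ?S" for j
    using integrable_laplace_normal_density_iexp pos s that by blast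
  show "integrable lborel (\<lambda>y. ofdm_pdf lam s a b y *\<^sub>R iexp (t * y))"
    unfolding expand by (intro Bochner_Integration.integrable_sum integrable_scaleR_right int)
  have int_inner: "integrable lborel (\<lambda>y. \<Sum>n\<in>?S. ?c j n *\<^sub>R ?g j y)" if "j \<in> ?S" for j
    by (intro Bochner_Integration.integrable_sum integrable_scaleR_right int[OF that])
  have "(\<integral>y. ofdm_pdf lam s a b y *\<^sub>R iexp (t * y) \<partial>lborel) = (\<Sum>j\<in>?S. \<integral>y. (\<Sum>n\<in>?S. ?c j n *\<^sub>R ?g j y) \<partial>lborel)"
    unfolding expand by (rule Bochner_Integration.integral_sum[OF int_inner])
  also have "\<dots> = (\<Sum>j\<in>?S. \<Sum>n\<in>?S. ?c j n *\<^sub>R integral\<^sup>L lborel (?g j))"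
  proof (intro sum.cong refl)
    fix j
    assume j: "j \<in> ?S"
    have "(\<integral>y. (\<Sum>n\<in>?S. ?c j n *\<^sub>R ?g j y) \<partial>lborel) = (\<Sum>n\<in>?S. \<integral>y. ?c j n *\<^sub>R ?g j y \<partial>lborel)"
      by (rule Bochner_Integration.integral_sum) (rule integrable_scaleR_right[OF int[OF j]])
    then show "(\<integral>y. (\<Sum>n\<in>?S. ?c j n *\<^sub>R ?g j y) \<partial>lborel) = (\<Sum>n\<in>?S. ?c j n *\<^sub>R integral\<^sup>L lborel (?g j))"
      by (simp only: integral_scaleR_right)
  qed
  also have "\<dots> = (\<Sum>j\<in>?S. \<Sum>n\<in>?S. ?c j n *\<^sub>R complex_of_real ((lam j)\<^sup>2 / ((lam j)\<^sup>2 + t\<^sup>2) * exp (- (s\<^sup>2 * t\<^sup>2) / 4)))"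
    using integral_laplace_normal_density_iexp pos s by (intro sum.cong refl) auto
  also have "\<dots> = complex_of_real ((\<Sum>j\<in>?S. \<Sum>n\<in>?S. partial_fraction_coeff lam ?S j * partial_fraction_coeff lam ?S n
      / (lam j + lam n) * (2 * lam j / ((lam j)\<^sup>2 + t\<^sup>2))) * exp (- (s\<^sup>2 * t\<^sup>2) / 4))"
    unfolding sum_distrib_right of_real_sum scaleR_conv_of_real of_real_mult[symmetric]
    using pos by (intro sum.cong refl arg_cong[where f=complex_of_real]) (auto simp: power2_eq_square)
  also have "\<dots> = complex_of_real ((\<Prod>l\<in>?S. (lam l)\<^sup>2 / ((lam l)\<^sup>2 + t\<^sup>2)) * exp (- (s\<^sup>2 * t\<^sup>2) / 4))"
    using ab inj pos by (simp add: prod_lorentzian_partial_fractions)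
  finally show "(\<integral>y. ofdm_pdf lam s a b y *\<^sub>R iexp (t * y) \<partial>lborel)
       = complex_of_real ((\<Prod>l\<in>{a..b}. (lam l)\<^sup>2 / ((lam l)\<^sup>2 + t\<^sup>2)) * exp (- (s\<^sup>2 * t\<^sup>2) / 4))" .
qed

lemma borel_measurable_ofdm_pdf[measurable]: "ofdm_pdf lam s a b \<in> borel_measurable borel"
  unfolding ofdm_pdf_def by measurable

lemma (in prob_space) distributed_sum_laplace_add_normal:
  fixes Z :: "nat \<Rightarrow> 'a \<Rightarrow> real" and W :: "'a \<Rightarrow> real" and lam :: "nat \<Rightarrow> real"
  assumes ab: "a \<le> b" and inj: "inj_on lam {a..b}" and pos: "\<forall>l\<in>{a..b}. lam l > 0" and s: "s > 0"
    and Z: "\<And>l. l \<in> {a..b} \<Longrightarrow> distributed M lborel (Z l) (\<lambda>x. ennreal (laplace_density (lam l) x))"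
    and W: "distributed M lborel W (\<lambda>x. ennreal (normal_density 0 (sqrt (s\<^sup>2 / 2)) x))"
    and indZ: "indep_vars (\<lambda>_. borel) Z {a..b}"
    and indW: "indep_var borel (\<lambda>\<omega>. \<Sum>l\<in>{a..b}. Z l \<omega>) borel W"
  shows "distributed M lborel (\<lambda>\<omega>. (\<Sum>l\<in>{a..b}. Z l \<omega>) + W \<omega>) (\<lambda>y. ennreal (ofdm_pdf lam s a b y))"
proof (rule distributed_add_indep_normal_if_fourier_eq[OF _ W _ indW])
  show "(\<lambda>\<omega>. \<Sum>l\<in>{a..b}. Z l \<omega>) \<in> borel_measurable M"
    using indep_var_rv1[OF indW] by simp
  show "sqrt (s\<^sup>2 / 2) > 0"
    using s by simp
  show "integrable lborel (ofdm_pdf lam s a b)"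
    using integrable_Re[OF integrable_ofdm_pdf_iexp[OF ab inj pos s, of 0]] by (simp add: scaleR_conv_of_real)
  fix t
  have "(CLINT \<omega>|M. iexp (t * Z l \<omega>)) = complex_of_real ((lam l)\<^sup>2 / ((lam l)\<^sup>2 + t\<^sup>2))" if "l \<in> {a..b}" for l
    unfolding char_distributed[OF Z[OF that]] using pos that by (simp add: char_laplace_density)
  then have "(\<Prod>l\<in>{a..b}. CLINT \<omega>|M. iexp (t * Z l \<omega>)) = complex_of_real (\<Prod>l\<in>{a..b}. (lam l)\<^sup>2 / ((lam l)\<^sup>2 + t\<^sup>2))"
    unfolding of_real_prod by (rule prod.cong[OF refl])
  moreover have "(CLINT \<omega>|M. iexp (t * W \<omega>)) = complex_of_real (exp (- (s\<^sup>2 * t\<^sup>2) / 4))"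
    unfolding char_distributed[OF W] using s by (simp add: char_normal_density power_mult_distrib)
  ultimately show "(CLINT \<omega>|M. iexp (t * ((\<Sum>l\<in>{a..b}. Z l \<omega>) + W \<omega>)))
      = (\<integral>y. ofdm_pdf lam s a b y *\<^sub>R iexp (t * y) \<partial>lborel)"
    unfolding char_sum_indep_add[OF finite_atLeastAtMost indZ indW] integral_ofdm_pdf_iexp[OF ab inj pos s]
    by (simp only: of_real_mult)
qed simp

lemma (in prob_space) indep_tap_products:
  fixes X H :: "nat \<Rightarrow> 'a \<Rightarrow> complex" and W :: "'a \<Rightarrow> complex" and g :: "complex \<Rightarrow> real"
  assumes indep: "indep_vars (\<lambda>_. borel)
      (\<lambda>i. case i of Inl j \<Rightarrow> X j | Inr (Inl l) \<Rightarrow> H l | Inr (Inr _) \<Rightarrow> W)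
      (Inl ` {..<nx} \<union> Inr ` Inl ` {..<nh} \<union> {Inr (Inr ())})"
    and L: "L \<subseteq> {..<nh}" "inj_on k L" "k ` L \<subseteq> {..<nx}"
    and g[measurable]: "g \<in> borel_measurable borel"
  shows indep_var_tap_data: "l \<in> L \<Longrightarrow> indep_var borel (H l) borel (X (k l))"
    and indep_vars_tap_products: "indep_vars (\<lambda>_. borel) (\<lambda>l \<omega>. g (H l \<omega> * X (k l) \<omega>)) L"
    and indep_var_tap_products_noise:
      "indep_var borel (\<lambda>\<omega>. \<Sum>l\<in>L. g (H l \<omega> * X (k l) \<omega>)) borel (\<lambda>\<omega>. g (W \<omega>))"
proof -
  let ?V = "\<lambda>i. case i of Inl j \<Rightarrow> X j | Inr (Inl l) \<Rightarrow> H l | Inr (Inr (_ :: unit)) \<Rightarrow> W"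
  let ?I = "Inl ` {..<nx} \<union> Inr ` Inl ` {..<nh} \<union> {Inr (Inr ())}"
  let ?R = "\<lambda>A \<omega>. restrict (\<lambda>i. ?V i \<omega>) A"
  have tap_in: "Inr (Inl l) \<in> ?I" "Inl (k l) \<in> ?I" if "l \<in> L" for l
    using L that by auto
  show "indep_var borel (H l) borel (X (k l))" if l: "l \<in> L"
  proof -
    have "indep_var (PiM {Inr (Inl l)} (\<lambda>_. borel)) (?R {Inr (Inl l)}) (PiM {Inl (k l)} (\<lambda>_. borel)) (?R {Inl (k l)})"
      using tap_in[OF l] by (intro indep_var_restrict[OF indep]) auto
    then have "indep_var borel ((\<lambda>f. f (Inr (Inl l))) \<circ> ?R {Inr (Inl l)}) borel ((\<lambda>f. f (Inl (k l))) \<circ> ?R {Inl (k l)})"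
      by (rule indep_var_compose) (auto intro: measurable_component_singleton)
    then show ?thesis
      by (simp add: comp_def)
  qed
  let ?K = "\<lambda>l. {Inr (Inl l), Inl (k l)}"
  have disj: "disjoint_family_on ?K L"
    using L(2) by (auto simp: disjoint_family_on_def dest: inj_onD)
  have "indep_vars (\<lambda>l. PiM (?K l) (\<lambda>_. borel)) (\<lambda>l. ?R (?K l)) L"
    using tap_in by (intro indep_vars_restrict[OF indep _ disj]) auto
  then have "indep_vars (\<lambda>_. borel) (\<lambda>l \<omega>. g (?R (?K l) \<omega> (Inr (Inl l)) * ?R (?K l) \<omega> (Inl (k l)))) L"
    by (rule indep_vars_compose2) simp
  then show "indep_vars (\<lambda>_. borel) (\<lambda>l \<omega>. g (H l \<omega> * X (k l) \<omega>)) L"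
    by simp
  let ?A = "Inr ` Inl ` L \<union> Inl ` k ` L" and ?B = "{Inr (Inr ())}"
  have "indep_var (PiM ?A (\<lambda>_. borel)) (?R ?A) (PiM ?B (\<lambda>_. borel)) (?R ?B)"
    using L by (intro indep_var_restrict[OF indep]) auto
  then have "indep_var borel ((\<lambda>f. \<Sum>l\<in>L. g (f (Inr (Inl l)) * f (Inl (k l)))) \<circ> ?R ?A)
                       borel ((\<lambda>f. g (f (Inr (Inr ())))) \<circ> ?R ?B)"
    by (rule indep_var_compose) (auto intro!: borel_measurable_sum)
  then show "indep_var borel (\<lambda>\<omega>. \<Sum>l\<in>L. g (H l \<omega> * X (k l) \<omega>)) borel (\<lambda>\<omega>. g (W \<omega>))"
    by (simp add: comp_def)
qed

lemma ofdm_pdf_symmetric: "ofdm_pdf lam s a b (- y) = ofdm_pdf lam s a b y"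
  unfolding ofdm_pdf_def by (intro arg_cong2[where f="(*)"] sum.cong refl) (simp add: add.commute)

lemma ofdm_y_noise_only:
  assumes "n < 0 \<or> nx + nh - 1 \<le> m"
  shows "ofdm_y nx ns nh x h w n m \<omega> = w n m \<omega>"
proof (cases "n < 0")
  case False
  with assms have "nx + nh - 1 \<le> m"
    by simp
  then have "ofdm_s nx x n (int m - int l) \<omega> = 0" if "l < nh" for l
    using that unfolding ofdm_s_def by (auto split: if_splits)
  then show ?thesis
    using False by (simp add: ofdm_y_def)
qed (simp add: ofdm_y_def)

lemma ofdm_y_active_taps:
  assumes n: "n \<ge> 0" and nh: "nh \<ge> 1"
  shows "ofdm_y nx ns nh x h w n m \<omega> =
     (\<Sum>l\<in>{fst (ofdm_ab nx nh m)..snd (ofdm_ab nx nh m)}. h (n * int ns + int m) l \<omega> * x n (m - l) \<omega>) + w n m \<omega>"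
proof -
  let ?L = "{fst (ofdm_ab nx nh m)..snd (ofdm_ab nx nh m)}"
  have L: "?L = {l. l < nh \<and> l \<le> m \<and> m - l < nx}"
    using nh by (auto simp: ofdm_ab_def)
  have "(\<Sum>l<nh. h (n * int ns + int m) l \<omega> * ofdm_s nx x n (int m - int l) \<omega>)
      = (\<Sum>l\<in>?L. h (n * int ns + int m) l \<omega> * ofdm_s nx x n (int m - int l) \<omega>)"
    unfolding L by (rule sum.mono_neutral_right) (auto simp: ofdm_s_def)
  also have "\<dots> = (\<Sum>l\<in>?L. h (n * int ns + int m) l \<omega> * x n (m - l) \<omega>)"
    unfolding L by (intro sum.cong refl) (auto simp: ofdm_s_def nat_diff_distrib of_nat_diff)
  finally show ?thesis
    using n by (simp add: ofdm_y_def)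
qed

text \<open>Multiplying by a unit \<open>u\<close> before taking the real part covers both components of the
  sample: \<open>u = 1\<close> gives the in-phase and \<open>u = - \<i>\<close> the quadrature component.\<close>

lemma ofdm_component_distributed:
  fixes M :: "'a measure" and \<sigma>x \<sigma>w :: real and \<sigma>h :: "nat \<Rightarrow> real"
    and x h w :: "int \<Rightarrow> nat \<Rightarrow> 'a \<Rightarrow> complex" and n :: int and m :: nat and u :: complex
  assumes P: "prob_space M"
    and nx: "nx \<ge> 1" and nh: "nh \<ge> 1" and \<sigma>x: "\<sigma>x > 0" and \<sigma>w: "\<sigma>w > 0"
    and \<sigma>h: "\<And>l. l < nh \<Longrightarrow> \<sigma>h l > 0"
    and data: "\<And>k. k < nx \<Longrightarrow> CN_rv M (\<sigma>x\<^sup>2) (x n k)"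
    and chan: "\<And>l. l < nh \<Longrightarrow> CN_rv M ((\<sigma>h l)\<^sup>2) (h (n * int ns + int m) l)"
    and indep: "prob_space.indep_vars M (\<lambda>_. borel)
          (\<lambda>i. case i of Inl k \<Rightarrow> x n k
                       | Inr (Inl l) \<Rightarrow> h (n * int ns + int m) l
                       | Inr (Inr _) \<Rightarrow> w n m)
          (Inl ` {..<nx} \<union> Inr ` Inl ` {..<nh} \<union> {Inr (Inr ())})"
    and n: "n \<ge> 0" and m: "m \<le> nx + nh - 2"
    and inj: "inj_on (\<lambda>k. 2 / (\<sigma>h k * \<sigma>x)) {fst (ofdm_ab nx nh m)..snd (ofdm_ab nx nh m)}"
    and u: "cmod u = 1"
    and noise: "distributed M lborel (\<lambda>\<omega>. Re (u * w n m \<omega>)) (\<lambda>y. ennreal (normal_density 0 (sqrt (\<sigma>w\<^sup>2 / 2)) y))"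
  shows "distributed M lborel (\<lambda>\<omega>. Re (u * ofdm_y nx ns nh x h w n m \<omega>))
      (\<lambda>y. ennreal (ofdm_pdf (\<lambda>k. 2 / (\<sigma>h k * \<sigma>x)) \<sigma>w (fst (ofdm_ab nx nh m)) (snd (ofdm_ab nx nh m)) y))"
proof -
  interpret prob_space M
    by (rule P)
  define a where "a = fst (ofdm_ab nx nh m)"
  define b where "b = snd (ofdm_ab nx nh m)"
  let ?H = "h (n * int ns + int m)" and ?X = "x n" and ?g = "\<lambda>z. Re (u * z)"
  have taps: "l < nh" "l \<le> m" "m - l < nx" if "l \<in> {a..b}" for l
    using that nx nh by (auto simp: a_def b_def ofdm_ab_def)
  have ab: "a \<le> b"
    using nx nh m by (auto simp: a_def b_def ofdm_ab_def)
  have L: "{a..b} \<subseteq> {..<nh}" "inj_on (\<lambda>l. m - l) {a..b}" "(\<lambda>l. m - l) ` {a..b} \<subseteq> {..<nx}"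
    using taps by (auto intro!: inj_onI) (metis diff_diff_cancel)
  have g: "?g \<in> borel_measurable borel"
    by simp
  have pos: "\<forall>l\<in>{a..b}. 2 / (\<sigma>h l * \<sigma>x) > 0"
    using taps \<sigma>h \<sigma>x by simp
  have components: "(\<lambda>\<omega>. Re (u * ofdm_y nx ns nh x h w n m \<omega>))
      = (\<lambda>\<omega>. (\<Sum>l\<in>{a..b}. ?g (?H l \<omega> * ?X (m - l) \<omega>)) + ?g (w n m \<omega>))"
    by (simp add: ofdm_y_active_taps[OF n nh] a_def b_def distrib_left sum_distrib_left Re_sum)
  show ?thesis
    unfolding components a_def[symmetric] b_def[symmetric]
  proof (rule distributed_sum_laplace_add_normal[OF ab inj[folded a_def b_def] pos \<sigma>w])
    show "distributed M lborel (\<lambda>\<omega>. ?g (?H l \<omega> * ?X (m - l) \<omega>))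
        (\<lambda>y. ennreal (laplace_density (2 / (\<sigma>h l * \<sigma>x)) y))" if l: "l \<in> {a..b}" for l
      using CN_product_laplace[OF chan[OF taps(1)[OF l]] data[OF taps(3)[OF l]] \<sigma>h[OF taps(1)[OF l]] \<sigma>x
          indep_var_tap_data[OF indep L g l] u] .
    show "indep_vars (\<lambda>_. borel) (\<lambda>l \<omega>. ?g (?H l \<omega> * ?X (m - l) \<omega>)) {a..b}"
      by (rule indep_vars_tap_products[OF indep L g])
    show "indep_var borel (\<lambda>\<omega>. \<Sum>l\<in>{a..b}. ?g (?H l \<omega> * ?X (m - l) \<omega>)) borel (\<lambda>\<omega>. ?g (w n m \<omega>))"
      by (rule indep_var_tap_products_noise[OF indep L g])
  qed (rule noise)
qed

theorem theorem2:
  fixes M :: "'a measure"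
    and nx nh nz ns :: nat
    and \<sigma>x \<sigma>w :: real and \<sigma>h :: "nat \<Rightarrow> real"
    and x :: "int \<Rightarrow> nat \<Rightarrow> 'a \<Rightarrow> complex"
    and h :: "int \<Rightarrow> nat \<Rightarrow> 'a \<Rightarrow> complex"
    and w :: "int \<Rightarrow> nat \<Rightarrow> 'a \<Rightarrow> complex"
    and n :: int and m :: nat
  assumes P: "prob_space M"
    and nx: "nx \<ge> 1" and nh: "nh \<ge> 1" and nz: "nz \<ge> nh" and ns: "ns = nx + nz"
    and \<sigma>x: "\<sigma>x > 0" and \<sigma>w: "\<sigma>w > 0" and \<sigma>h: "\<And>l. l < nh \<Longrightarrow> \<sigma>h l > 0"
    and data: "\<And>n k. n \<ge> 0 \<Longrightarrow> k < nx \<Longrightarrow> CN_rv M (\<sigma>x\<^sup>2) (x n k)"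
    and chan: "\<And>t l. l < nh \<Longrightarrow> CN_rv M ((\<sigma>h l)\<^sup>2) (h t l)"
    and noise: "\<And>n m. m < ns \<Longrightarrow> CN_rv M (\<sigma>w\<^sup>2) (w n m)"
    and indep: "\<And>n m. n \<ge> 0 \<Longrightarrow> m < ns \<Longrightarrow>
        prob_space.indep_vars M (\<lambda>_. borel)
          (\<lambda>i. case i of Inl k \<Rightarrow> x n k
                       | Inr (Inl l) \<Rightarrow> h (n * int ns + int m) l
                       | Inr (Inr _) \<Rightarrow> w n m)
          (Inl ` {..<nx} \<union> Inr ` Inl ` {..<nh} \<union> {Inr (Inr ())})"
    and m: "m < ns"
  shows
    "((n < 0 \<or> (n \<ge> 0 \<and> nx + nh - 1 \<le> m)) \<longrightarrow>
        distributed M lborel (\<lambda>\<omega>. Re (ofdm_y nx ns nh x h w n m \<omega>))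
          (\<lambda>y. ennreal (1 / sqrt (pi * \<sigma>w\<^sup>2) * exp (- y\<^sup>2 / \<sigma>w\<^sup>2))) \<and>
        distributed M lborel (\<lambda>\<omega>. Im (ofdm_y nx ns nh x h w n m \<omega>))
          (\<lambda>y. ennreal (1 / sqrt (pi * \<sigma>w\<^sup>2) * exp (- y\<^sup>2 / \<sigma>w\<^sup>2))))
     \<and>
     ((n \<ge> 0 \<and> m \<le> nx + nh - 2 \<and>
       inj_on (\<lambda>k. 2 / (\<sigma>h k * \<sigma>x)) {fst (ofdm_ab nx nh m)..snd (ofdm_ab nx nh m)}) \<longrightarrow>
        (let lam = (\<lambda>k. 2 / (\<sigma>h k * \<sigma>x)); a = fst (ofdm_ab nx nh m); b = snd (ofdm_ab nx nh m);
             f = ofdm_pdf lam \<sigma>w a b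
         in (\<forall>y. f y = f (- y)) \<and>
            distributed M lborel (\<lambda>\<omega>. Re (ofdm_y nx ns nh x h w n m \<omega>)) (\<lambda>y. ennreal (f y)) \<and>
            distributed M lborel (\<lambda>\<omega>. Im (ofdm_y nx ns nh x h w n m \<omega>)) (\<lambda>y. ennreal (f y))))"
proof -
  interpret prob_space M
    by (rule P)
  note noise_components = CN_rv_components(2,3)[OF noise[OF m]]
  have component: "distributed M lborel (\<lambda>\<omega>. Re (u * ofdm_y nx ns nh x h w n m \<omega>))
      (\<lambda>y. ennreal (ofdm_pdf (\<lambda>k. 2 / (\<sigma>h k * \<sigma>x)) \<sigma>w (fst (ofdm_ab nx nh m)) (snd (ofdm_ab nx nh m)) y))"
    if n: "n \<ge> 0" and "m \<le> nx + nh - 2" "inj_on (\<lambda>k. 2 / (\<sigma>h k * \<sigma>x)) {fst (ofdm_ab nx nh m)..snd (ofdm_ab nx nh m)}"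
      and "cmod u = 1" "distributed M lborel (\<lambda>\<omega>. Re (u * w n m \<omega>)) (\<lambda>y. ennreal (normal_density 0 (sqrt (\<sigma>w\<^sup>2 / 2)) y))"
    for u
    by (rule ofdm_component_distributed[where x = x and h = h and w = w and n = n and m = m and ns = ns,
          OF P nx nh \<sigma>x \<sigma>w \<sigma>h data[OF n] chan[where t = "n * int ns + int m"] indep[OF n m] n that(2-5)])
  show ?thesis
    using noise_components component[of 1] component[of "- \<i>"]
    by (auto simp: Let_def ofdm_y_noise_only normal_density_half_square[OF \<sigma>w] ofdm_pdf_symmetric)
qed

end
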